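(* There is an algorithm which, given as input an interpreted automatic structure $(\Gamma,\iota)$ describing a semigroup $S$, decides whether $S$ is a monoid, and if so finds a word in the language of representatives $L$ representing the identity of $S$.
   Context: Let $A$ be a finite alphabet, $\$ \notin A$, and let $\delta$ send a pair of words over $A$ to the word over $(A\cup\{\$\})\times(A\cup\{\$\})$ obtained by padding the shorter word on the right with $\$$ and reading both letter by letter. A synchronous automaton recognises a relation $R$ if it accepts exactly $\delta(R)$. A pre-automatic structure $\Gamma$ consists of a finite alphabet $A$, a finite automaton recognising $L\subseteq A^*$, a synchronous automaton recognising $L_=\subseteq L\times L$, and for each $a\in A$ a synchronous automaton recognising $L_a\subseteq L\times L$. An interpretation with respect to a semigroup $S$ is a morphism $\sigma:A^*\to S$ with $\sigma(L)=S$ such that for $u,v\in L$: $(u,v)\in L_=$ iff $\sigma(u)=\sigma(v)$, and $(u,v)\in L_a$ iff $\sigma(ua)=\sigma(v)$. An assignment of generators is a function $\iota:A\to L$ for which there exists an interpretation $\sigma$ with $\sigma(a)=\sigma(\iota(a))$ for all $a\in A$ (such $\sigma$ is consistent with $\iota$). An interpreted automatic structure describing $S$ is a pair $(\Gamma,\iota)$ where the interpretation consistent with $\iota$ maps into $S$; it is given as the automata of $\Gamma$ together with the words $\iota(a)$. A word $w$ represents $\sigma(w)$. *)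

theory Defs
  imports Main "HOL-Library.Nat_Bijection" "HOL-Algebra.Group"
begin

section \<open>A model of computation: Kleene partial recursive functions on nat\<close>

datatype recf = Zf | Sf | Proj nat | Comp recf "recf list" | Prim recf recf | Mu recf

inductive eval :: "recf \<Rightarrow> nat list \<Rightarrow> nat \<Rightarrow> bool" where
  ev_Z: "eval Zf xs 0"
| ev_S: "eval Sf (x # xs) (Suc x)"
| ev_Proj: "i < length xs \<Longrightarrow> eval (Proj i) xs (xs ! i)"
| ev_Comp: "length ys = length gs \<Longrightarrow> (\<forall>i < length gs. eval (gs ! i) xs (ys ! i))
            \<Longrightarrow> eval f ys z \<Longrightarrow> eval (Comp f gs) xs z"
| ev_Prim0: "eval f xs y \<Longrightarrow> eval (Prim f g) (0 # xs) y"
| ev_PrimS: "eval (Prim f g) (n # xs) y \<Longrightarrow> eval g (y # n # xs) z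
            \<Longrightarrow> eval (Prim f g) (Suc n # xs) z"
| ev_Mu: "eval f (n # xs) 0 \<Longrightarrow> (\<forall>m < n. \<exists>y. eval f (m # xs) (Suc y))
            \<Longrightarrow> eval (Mu f) xs n"

text \<open>A (nondeterministic) finite automaton with states in nat and letters of type 'l:
  (initial states, final states, transitions (p, letter, q)).\<close>
type_synonym 'l nfa = "nat list \<times> nat list \<times> (nat \<times> 'l \<times> nat) list"

fun reach :: "(nat \<times> 'l \<times> nat) list \<Rightarrow> nat set \<Rightarrow> 'l list \<Rightarrow> nat set" where
  "reach T Q [] = Q"
| "reach T Q (a # w) = reach T {q'. \<exists>q \<in> Q. (q, a, q') \<in> set T} w"

definition accepts :: "'l nfa \<Rightarrow> 'l list \<Rightarrow> bool" where
  "accepts M w = (case M of (I, F, T) \<Rightarrow> reach T (set I) w \<inter> set F \<noteq> {})"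

definition lang :: "'l nfa \<Rightarrow> 'l list set" where
  "lang M = {w. accepts M w}"

text \<open>Letters of the alphabet A are 0,...,k-1; the padding symbol \$ is None.\<close>
type_synonym pletter = "nat option \<times> nat option"

definition conv :: "nat list \<Rightarrow> nat list \<Rightarrow> pletter list" where
  "conv u v = map (\<lambda>i. (if i < length u then Some (u ! i) else None,
                        if i < length v then Some (v ! i) else None))
                  [0..<max (length u) (length v)]"

definition sync_recognises :: "pletter nfa \<Rightarrow> (nat list \<times> nat list) set \<Rightarrow> bool" where
  "sync_recognises M R \<longleftrightarrow> lang M = (\<lambda>(u, v). conv u v) ` R"

definition sync_rel :: "pletter nfa \<Rightarrow> (nat list \<times> nat list) set" where
  "sync_rel M = {(u, v). accepts M (conv u v)}"

text \<open>(k, M_L, M_eq, [M_0, ..., M_(k-1)]): alphabet A = {0..<k}.\<close>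
type_synonym preaut = "nat \<times> nat nfa \<times> pletter nfa \<times> pletter nfa list"

definition alph :: "preaut \<Rightarrow> nat set" where
  "alph \<Gamma> = {..< fst \<Gamma>}"

definition L_of :: "preaut \<Rightarrow> nat list set" where
  "L_of \<Gamma> = (case \<Gamma> of (k, ML, Meq, Ma) \<Rightarrow> lang ML)"

definition Leq_of :: "preaut \<Rightarrow> (nat list \<times> nat list) set" where
  "Leq_of \<Gamma> = (case \<Gamma> of (k, ML, Meq, Ma) \<Rightarrow> sync_rel Meq)"

definition La_of :: "preaut \<Rightarrow> nat \<Rightarrow> (nat list \<times> nat list) set" where
  "La_of \<Gamma> a = (case \<Gamma> of (k, ML, Meq, Ma) \<Rightarrow> sync_rel (Ma ! a))"

definition pre_automatic :: "preaut \<Rightarrow> bool" where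
  "pre_automatic \<Gamma> \<longleftrightarrow> (case \<Gamma> of (k, ML, Meq, Ma) \<Rightarrow>
      lang ML \<subseteq> lists {..<k}
    \<and> (\<exists>R. R \<subseteq> lang ML \<times> lang ML \<and> sync_recognises Meq R)
    \<and> length Ma = k
    \<and> (\<forall>a < k. \<exists>R. R \<subseteq> lang ML \<times> lang ML \<and> sync_recognises (Ma ! a) R))"

definition semigroup_on :: "'a set \<Rightarrow> ('a \<Rightarrow> 'a \<Rightarrow> 'a) \<Rightarrow> bool" where
  "semigroup_on S f \<longleftrightarrow> (\<forall>x\<in>S. \<forall>y\<in>S. f x y \<in> S)
     \<and> (\<forall>x\<in>S. \<forall>y\<in>S. \<forall>z\<in>S. f (f x y) z = f x (f y z))"

text \<open>The semigroup morphism A^+ \<rightarrow> S determined by the images g of the letters.\<close>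
fun word_val :: "('a \<Rightarrow> 'a \<Rightarrow> 'a) \<Rightarrow> (nat \<Rightarrow> 'a) \<Rightarrow> nat list \<Rightarrow> 'a" where
  "word_val f g [] = undefined"
| "word_val f g (a # w) = foldl (\<lambda>x b. f x (g b)) (g a) w"

definition is_interpretation :: "preaut \<Rightarrow> 'a set \<Rightarrow> ('a \<Rightarrow> 'a \<Rightarrow> 'a) \<Rightarrow> (nat \<Rightarrow> 'a) \<Rightarrow> bool" where
  "is_interpretation \<Gamma> S f g \<longleftrightarrow>
      g ` alph \<Gamma> \<subseteq> S
    \<and> [] \<notin> L_of \<Gamma>
    \<and> word_val f g ` L_of \<Gamma> = S
    \<and> (\<forall>u \<in> L_of \<Gamma>. \<forall>v \<in> L_of \<Gamma>. (u, v) \<in> Leq_of \<Gamma> \<longleftrightarrow> word_val f g u = word_val f g v)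
    \<and> (\<forall>a \<in> alph \<Gamma>. \<forall>u \<in> L_of \<Gamma>. \<forall>v \<in> L_of \<Gamma>.
          (u, v) \<in> La_of \<Gamma> a \<longleftrightarrow> word_val f g (u @ [a]) = word_val f g v)"

definition consistent :: "preaut \<Rightarrow> nat list list \<Rightarrow> ('a \<Rightarrow> 'a \<Rightarrow> 'a) \<Rightarrow> (nat \<Rightarrow> 'a) \<Rightarrow> bool" where
  "consistent \<Gamma> \<iota> f g \<longleftrightarrow> (\<forall>a \<in> alph \<Gamma>. g a = word_val f g (\<iota> ! a))"

definition assignment :: "preaut \<Rightarrow> nat list list \<Rightarrow> bool" where
  "assignment \<Gamma> \<iota> \<longleftrightarrow> length \<iota> = fst \<Gamma> \<and> set \<iota> \<subseteq> L_of \<Gamma>"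

text \<open>The existence of an interpretation consistent with \<iota> (required for \<iota> to be an
  assignment of generators) is witnessed in describes by the interpretation g itself.
  (\<Gamma>, \<iota>) is an interpreted automatic structure describing (S, f), where g gives the
  interpretation consistent with \<iota> (which maps onto S).\<close>
definition describes :: "preaut \<Rightarrow> nat list list \<Rightarrow> 'a set \<Rightarrow> ('a \<Rightarrow> 'a \<Rightarrow> 'a) \<Rightarrow> (nat \<Rightarrow> 'a) \<Rightarrow> bool" where
  "describes \<Gamma> \<iota> S f g \<longleftrightarrow> pre_automatic \<Gamma> \<and> assignment \<Gamma> \<iota>
     \<and> is_interpretation \<Gamma> S f g \<and> consistent \<Gamma> \<iota> f g"

definition enc_opt :: "nat option \<Rightarrow> nat" where
  "enc_opt x = (case x of None \<Rightarrow> 0 | Some n \<Rightarrow> Suc n)"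

definition enc_pletter :: "pletter \<Rightarrow> nat" where
  "enc_pletter p = prod_encode (enc_opt (fst p), enc_opt (snd p))"

definition enc_nfa :: "('l \<Rightarrow> nat) \<Rightarrow> 'l nfa \<Rightarrow> nat" where
  "enc_nfa e M = (case M of (I, F, T) \<Rightarrow>
     prod_encode (list_encode I, prod_encode (list_encode F,
       list_encode (map (\<lambda>(p, a, q). prod_encode (p, prod_encode (e a, q))) T))))"

definition enc_input :: "preaut \<Rightarrow> nat list list \<Rightarrow> nat" where
  "enc_input \<Gamma> \<iota> = (case \<Gamma> of (k, ML, Meq, Ma) \<Rightarrow>
     prod_encode (k, prod_encode (enc_nfa id ML, prod_encode (enc_nfa enc_pletter Meq,
       prod_encode (list_encode (map (enc_nfa enc_pletter) Ma), list_encode (map list_encode \<iota>))))))"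

text \<open>Output convention: 0 means "S is not a monoid"; Suc (list_encode w) means
  "S is a monoid and w represents its identity".\<close>

end

theory Submission
  imports Defs
begin

text \<open>If S has an identity, it is represented by a word w of L, and w is a left unit for the
  generators: (w, iota ! a) is in L_a for every letter a. Conversely every such w represents a
  left identity of S, since the letters generate S. These words form the intersection of L with
  the regular languages of the w with (w, iota ! a) in L_a, so a pumping argument bounds the
  length of a shortest one, and a bounded search decides whether one exists and finds it.
  Given such a left identity e, S is a monoid iff e is also a right unit for the generators.
  A word of L representing (iota ! a) w is reached from iota ! a by steps through
  L_(w ! 0), L_(w ! 1), ...; such chains exist because L represents all of S, so an unbounded
  search for them terminates, and the automaton for L_= then tests whether the word represents
  the same element as iota ! a. All of this is computed on Cantor codes of the input by
  primitive recursion and a single minimisation.\<close>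

section \<open>Computable functions\<close>

definition computable :: "nat \<Rightarrow> (nat list \<Rightarrow> nat) \<Rightarrow> bool" where
  "computable n F \<longleftrightarrow> (\<exists>P. \<forall>xs. length xs = n \<longrightarrow> eval P xs (F xs))"

lemma computable_cong:
  "computable m F \<Longrightarrow> (\<And>xs. length xs = n \<Longrightarrow> F xs = G xs) \<Longrightarrow> m = n \<Longrightarrow> computable n G"
  unfolding computable_def by metis

lemma length_1E: assumes "length xs = 1" obtains a where "xs = [a]"
  using assms by (cases xs) auto

lemma length_2E: assumes "length xs = 2" obtains a b where "xs = [a, b]"
  using assms by (cases xs; cases "tl xs") auto

lemma length_3E: assumes "length xs = 3" obtains a b c where "xs = [a, b, c]"
  using assms by (cases xs; cases "tl xs"; cases "tl (tl xs)") (auto simp: numeral_3_eq_3)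

lemma computable_zero: "computable n (\<lambda>_. 0)"
  unfolding computable_def by (auto intro: ev_Z)

lemma computable_proj: "i < n \<Longrightarrow> computable n (\<lambda>xs. xs ! i)"
  unfolding computable_def by (auto intro!: exI[of _ "Proj i"] ev_Proj)

lemma computable_Suc:
  assumes "computable n F"
  shows "computable n (\<lambda>xs. Suc (F xs))"
proof -
  obtain P where P: "\<forall>xs. length xs = n \<longrightarrow> eval P xs (F xs)"
    using assms unfolding computable_def by blast
  have "eval (Comp Sf [P]) xs (Suc (F xs))" if "length xs = n" for xs
    using P that by (intro ev_Comp[where ys="[F xs]"]) (auto intro: ev_S)
  then show ?thesis unfolding computable_def by blast
qed

lemma computable_comp:
  assumes F: "computable m F" and G: "\<And>i. i < m \<Longrightarrow> computable n (G i)"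
  shows "computable n (\<lambda>xs. F (map (\<lambda>i. G i xs) [0..<m]))"
proof -
  obtain PF where PF: "\<forall>ys. length ys = m \<longrightarrow> eval PF ys (F ys)"
    using F unfolding computable_def by blast
  have "\<forall>i. \<exists>P. i < m \<longrightarrow> (\<forall>xs. length xs = n \<longrightarrow> eval P xs (G i xs))"
    using G unfolding computable_def by blast
  then obtain PG where PG: "\<And>i xs. i < m \<Longrightarrow> length xs = n \<Longrightarrow> eval (PG i) xs (G i xs)"
    by metis
  have "eval (Comp PF (map PG [0..<m])) xs (F (map (\<lambda>i. G i xs) [0..<m]))" if "length xs = n" for xs
    by (rule ev_Comp[where ys="map (\<lambda>i. G i xs) [0..<m]"]) (use PF PG that in auto)
  then show ?thesis unfolding computable_def by blast
qed

lemma computable_rec_nat: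
  assumes F: "computable n F" and G: "computable (Suc (Suc n)) G"
  shows "computable (Suc n) (\<lambda>xs. rec_nat (F (tl xs)) (\<lambda>k r. G (r # k # tl xs)) (hd xs))"
proof -
  obtain PF where PF: "\<forall>ys. length ys = n \<longrightarrow> eval PF ys (F ys)"
    using F unfolding computable_def by blast
  obtain PG where PG: "\<forall>ys. length ys = Suc (Suc n) \<longrightarrow> eval PG ys (G ys)"
    using G unfolding computable_def by blast
  have Prim: "eval (Prim PF PG) (y # ys) (rec_nat (F ys) (\<lambda>k r. G (r # k # ys)) y)"
    if "length ys = n" for y ys
  proof (induction y)
    case 0 then show ?case using PF that by (auto intro: ev_Prim0)
  next
    case (Suc y) then show ?case using PG that by (auto intro: ev_PrimS)
  qed
  have "eval (Prim PF PG) xs (rec_nat (F (tl xs)) (\<lambda>k r. G (r # k # tl xs)) (hd xs))"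
    if "length xs = Suc n" for xs
    using that Prim by (cases xs) auto
  then show ?thesis unfolding computable_def by blast
qed

lemma computable_comp1:
  assumes "computable 1 (\<lambda>xs. h (xs!0))" "computable n A"
  shows "computable n (\<lambda>xs. h (A xs))"
  using computable_comp[of 1 "\<lambda>xs. h (xs!0)" n "\<lambda>_. A"] assms by simp

lemma computable_comp2:
  assumes "computable 2 (\<lambda>xs. h (xs!0) (xs!1))" "computable n A" "computable n B"
  shows "computable n (\<lambda>xs. h (A xs) (B xs))"
proof -
  have "computable n (\<lambda>xs. (\<lambda>ys. h (ys!0) (ys!1)) (map (\<lambda>i. ([A, B] ! i) xs) [0..<2]))"
    by (rule computable_comp) (use assms in \<open>auto simp: less_2_cases_iff\<close>)
  then show ?thesis by (simp add: upt_rec)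
qed

lemma computable_comp3:
  assumes "computable 3 (\<lambda>xs. h (xs!0) (xs!1) (xs!2))" "computable n A" "computable n B" "computable n C"
  shows "computable n (\<lambda>xs. h (A xs) (B xs) (C xs))"
proof -
  have "computable n (\<lambda>xs. (\<lambda>ys. h (ys!0) (ys!1) (ys!2)) (map (\<lambda>i. ([A, B, C] ! i) xs) [0..<3]))"
    by (rule computable_comp) (use assms in \<open>auto simp: numeral_3_eq_3 less_Suc_eq\<close>)
  then show ?thesis by (simp add: upt_rec)
qed

lemma computable_const: "computable n (\<lambda>_. c)"
  by (induction c) (auto intro: computable_zero computable_Suc)

lemma computable_add: "computable 2 (\<lambda>xs. xs!0 + xs!1)"
proof -
  have "computable (Suc 1) (\<lambda>xs. rec_nat (tl xs ! 0) (\<lambda>k r. Suc ((r # k # tl xs) ! 0)) (hd xs))"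
    by (rule computable_rec_nat) (auto intro: computable_Suc computable_proj)
  then show ?thesis
  proof (rule computable_cong)
    fix xs :: "nat list" assume "length xs = 2"
    then obtain a b where "xs = [a, b]" by (rule length_2E)
    then show "rec_nat (tl xs ! 0) (\<lambda>k r. Suc ((r # k # tl xs) ! 0)) (hd xs) = xs ! 0 + xs ! 1"
      by (induction a arbitrary: xs) auto
  qed simp
qed

lemma computable_minus: "computable 2 (\<lambda>xs. xs!0 - xs!1)"
proof -
  have pred: "computable 1 (\<lambda>xs. xs!0 - 1)"
  proof -
    have "computable (Suc 0) (\<lambda>xs. rec_nat 0 (\<lambda>k r. (r # k # tl xs) ! 1) (hd xs))"
      by (rule computable_rec_nat) (auto intro: computable_zero computable_proj)
    then show ?thesis
    proof (rule computable_cong)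
      fix xs :: "nat list" assume "length xs = 1"
      then obtain a where "xs = [a]" by (rule length_1E)
      then show "rec_nat 0 (\<lambda>k r. (r # k # tl xs) ! 1) (hd xs) = xs ! 0 - 1"
        by (cases a) auto
    qed simp
  qed
  have "computable (Suc 1) (\<lambda>xs. rec_nat (tl xs ! 0) (\<lambda>k r. (r # k # tl xs) ! 0 - 1) (hd xs))"
    by (rule computable_rec_nat, rule computable_proj, simp, rule computable_comp1[OF pred])
      (rule computable_proj, simp)
  then have "computable 2 (\<lambda>xs. xs!1 - xs!0)"
  proof (rule computable_cong)
    fix xs :: "nat list" assume "length xs = 2"
    then obtain a b where "xs = [a, b]" by (rule length_2E)
    then show "rec_nat (tl xs ! 0) (\<lambda>k r. (r # k # tl xs) ! 0 - 1) (hd xs) = xs ! 1 - xs ! 0"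
      by (induction a arbitrary: xs) auto
  qed simp
  from computable_comp2[OF this, of 2 "\<lambda>xs. xs!1" "\<lambda>xs. xs!0"] show ?thesis
    by (simp add: computable_proj)
qed

lemma computable_if_zero: "computable 3 (\<lambda>xs. if xs!0 = 0 then xs!1 else xs!2)"
proof -
  have "computable (Suc 2) (\<lambda>xs. rec_nat (tl xs ! 0) (\<lambda>k r. (r # k # tl xs) ! 3) (hd xs))"
    by (rule computable_rec_nat) (auto intro: computable_proj)
  then show ?thesis
  proof (rule computable_cong)
    fix xs :: "nat list" assume "length xs = 3"
    then obtain a b c where "xs = [a, b, c]" by (rule length_3E)
    then show "rec_nat (tl xs ! 0) (\<lambda>k r. (r # k # tl xs) ! 3) (hd xs) = (if xs!0 = 0 then xs!1 else xs!2)"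
      by (cases a) (auto simp: numeral_3_eq_3)
  qed simp
qed

lemma computable_triangle: "computable 1 (\<lambda>xs. triangle (xs!0))"
proof -
  have "computable (Suc 0) (\<lambda>xs. rec_nat 0 (\<lambda>k r. (r # k # tl xs) ! 0 + Suc ((r # k # tl xs) ! 1)) (hd xs))"
    by (rule computable_rec_nat)
      (auto intro!: computable_zero computable_comp2[OF computable_add] computable_Suc computable_proj)
  then show ?thesis
  proof (rule computable_cong)
    fix xs :: "nat list" assume "length xs = 1"
    then obtain a where "xs = [a]" by (rule length_1E)
    then show "rec_nat 0 (\<lambda>k r. (r # k # tl xs) ! 0 + Suc ((r # k # tl xs) ! 1)) (hd xs) = triangle (xs ! 0)"
      by (induction a arbitrary: xs) auto
  qed simp
qed

lemma computable_prod_encode: "computable 2 (\<lambda>xs. prod_encode (xs!0, xs!1))"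
proof -
  have "computable 2 (\<lambda>xs. triangle (xs!0 + xs!1) + xs!0)"
    by (intro computable_comp2[OF computable_add] computable_comp1[OF computable_triangle]
        computable_proj) auto
  then show ?thesis by (simp add: prod_encode_def)
qed

lemma computable_le: "computable 2 (\<lambda>xs. if xs!0 \<le> xs!1 then 1 else 0)"
proof -
  have "computable 2 (\<lambda>xs. 1 - (xs!0 - xs!1))"
    by (intro computable_comp2[OF computable_minus] computable_const computable_proj) auto
  then show ?thesis by (rule computable_cong) auto
qed

definition pair_diag :: "nat \<Rightarrow> nat" where
  "pair_diag n = rec_nat 0 (\<lambda>k r. if triangle (Suc r) \<le> Suc k then Suc r else r) n"

lemma pair_diag_bounds: "triangle (pair_diag n) \<le> n \<and> n < triangle (Suc (pair_diag n))"
proof (induction n)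
  case 0 then show ?case by (simp add: pair_diag_def)
next
  case (Suc n)
  have eq: "pair_diag (Suc n) =
      (if triangle (Suc (pair_diag n)) \<le> Suc n then Suc (pair_diag n) else pair_diag n)"
    by (simp add: pair_diag_def)
  show ?case
  proof (cases "triangle (Suc (pair_diag n)) \<le> Suc n")
    case True
    then have "triangle (Suc (pair_diag n)) = Suc n" using Suc by simp
    then show ?thesis using True eq by simp
  next
    case False then show ?thesis using Suc eq by simp
  qed
qed

lemma computable_pair_diag: "computable 1 (\<lambda>xs. pair_diag (xs!0))"
proof -
  let ?step = "\<lambda>zs. if (if triangle (Suc (zs!0)) \<le> Suc (zs!1) then 1 else (0::nat)) = 0
                    then zs!0 else Suc (zs!0)"
  have "computable (Suc 0) (\<lambda>xs. rec_nat 0 (\<lambda>k r. ?step (r # k # tl xs)) (hd xs))"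
    apply (rule computable_rec_nat, rule computable_zero)
    apply (rule computable_comp3[OF computable_if_zero] computable_comp2[OF computable_le]
        computable_comp1[OF computable_triangle] computable_Suc computable_proj | (simp; fail))+
    done
  then show ?thesis
  proof (rule computable_cong)
    fix xs :: "nat list" assume "length xs = 1"
    then obtain a where "xs = [a]" by (rule length_1E)
    then show "rec_nat 0 (\<lambda>k r. ?step (r # k # tl xs)) (hd xs) = pair_diag (xs ! 0)"
      by (simp add: pair_diag_def, intro arg_cong[of _ _ "\<lambda>s. rec_nat 0 s a"] ext, simp)
  qed simp
qed

definition pfst :: "nat \<Rightarrow> nat" where "pfst n = fst (prod_decode n)"
definition psnd :: "nat \<Rightarrow> nat" where "psnd n = snd (prod_decode n)"

lemma pfst_prod_encode[simp]: "pfst (prod_encode (a, b)) = a"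
  by (simp add: pfst_def)

lemma psnd_prod_encode[simp]: "psnd (prod_encode (a, b)) = b"
  by (simp add: psnd_def)

lemma prod_decode_pair_diag:
  "prod_decode n = (n - triangle (pair_diag n), pair_diag n - (n - triangle (pair_diag n)))"
proof -
  let ?s = "pair_diag n"
  have "triangle ?s \<le> n" "n < triangle ?s + Suc ?s" using pair_diag_bounds[of n] by auto
  then have "prod_encode (n - triangle ?s, ?s - (n - triangle ?s)) = n"
    by (simp add: prod_encode_def)
  then show ?thesis by (metis prod_encode_inverse)
qed

lemma computable_pfst: "computable 1 (\<lambda>xs. pfst (xs!0))"
proof -
  have "computable 1 (\<lambda>xs. xs!0 - triangle (pair_diag (xs!0)))"
    by (intro computable_comp2[OF computable_minus] computable_comp1[OF computable_triangle]
        computable_comp1[OF computable_pair_diag] computable_proj) auto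
  then show ?thesis by (simp add: pfst_def prod_decode_pair_diag)
qed

lemma computable_psnd: "computable 1 (\<lambda>xs. psnd (xs!0))"
proof -
  have "computable 1 (\<lambda>xs. pair_diag (xs!0) - (xs!0 - triangle (pair_diag (xs!0))))"
    by (intro computable_comp2[OF computable_minus] computable_comp1[OF computable_triangle]
        computable_comp1[OF computable_pair_diag] computable_proj) auto
  then show ?thesis by (simp add: psnd_def prod_decode_pair_diag)
qed


section \<open>Unary computable functions and decidable predicates\<close>

text \<open>Several arguments are passed to a unary function as one Cantor-paired number.\<close>

definition computable1 :: "(nat \<Rightarrow> nat) \<Rightarrow> bool" where
  "computable1 F \<longleftrightarrow> computable 1 (\<lambda>xs. F (xs!0))"

definition decidable :: "(nat \<Rightarrow> bool) \<Rightarrow> bool" where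
  "decidable P \<longleftrightarrow> computable1 (\<lambda>x. if P x then 1 else 0)"

named_theorems computable_intros

lemma computable_comp_computable1:
  "computable1 F \<Longrightarrow> computable n A \<Longrightarrow> computable n (\<lambda>xs. F (A xs))"
  unfolding computable1_def by (rule computable_comp1[of F])

lemma computable1_comp: "computable1 F \<Longrightarrow> computable1 G \<Longrightarrow> computable1 (\<lambda>x. F (G x))"
  unfolding computable1_def by (rule computable_comp1[of F])

lemma computable1_comp2:
  "computable 2 (\<lambda>xs. h (xs!0) (xs!1)) \<Longrightarrow> computable1 A \<Longrightarrow> computable1 B
    \<Longrightarrow> computable1 (\<lambda>x. h (A x) (B x))"
  unfolding computable1_def by (rule computable_comp2[of h])

lemma computable1_cong: "computable1 F \<Longrightarrow> (\<And>x. F x = G x) \<Longrightarrow> computable1 G"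
  by (metis ext)

lemma computable1_id[computable_intros]: "computable1 (\<lambda>x. x)"
  unfolding computable1_def by (rule computable_proj) simp

lemma computable1_const[computable_intros]: "computable1 (\<lambda>x. c)"
  unfolding computable1_def by (rule computable_const)

lemma computable1_Suc[computable_intros]: "computable1 A \<Longrightarrow> computable1 (\<lambda>x. Suc (A x))"
  unfolding computable1_def by (rule computable_Suc)

lemma computable1_pfst[computable_intros]: "computable1 A \<Longrightarrow> computable1 (\<lambda>x. pfst (A x))"
  using computable1_comp[of pfst] computable_pfst by (simp add: computable1_def)

lemma computable1_psnd[computable_intros]: "computable1 A \<Longrightarrow> computable1 (\<lambda>x. psnd (A x))"
  using computable1_comp[of psnd] computable_psnd by (simp add: computable1_def)

lemma computable1_add[computable_intros]: "computable1 A \<Longrightarrow> computable1 B \<Longrightarrow> computable1 (\<lambda>x. A x + B x)"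
  by (rule computable1_comp2[OF computable_add])

lemma computable1_minus[computable_intros]: "computable1 A \<Longrightarrow> computable1 B \<Longrightarrow> computable1 (\<lambda>x. A x - B x)"
  by (rule computable1_comp2[OF computable_minus])

lemma computable1_prod_encode[computable_intros]:
  "computable1 A \<Longrightarrow> computable1 B \<Longrightarrow> computable1 (\<lambda>x. prod_encode (A x, B x))"
  by (rule computable1_comp2[OF computable_prod_encode])

lemma computable1_if[computable_intros]:
  assumes "decidable P" "computable1 A" "computable1 B"
  shows "computable1 (\<lambda>x. if P x then A x else B x)"
proof -
  have "computable1 (\<lambda>x. if (if P x then 1 else 0::nat) = 0 then B x else A x)"
    using computable_comp3[OF computable_if_zero] assms by (simp add: computable1_def decidable_def)
  then show ?thesis by (rule computable1_cong) simp
qed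

lemma decidable_comp: "decidable P \<Longrightarrow> computable1 G \<Longrightarrow> decidable (\<lambda>x. P (G x))"
  unfolding decidable_def by (drule computable1_comp) auto

lemma decidable_le[computable_intros]: "computable1 A \<Longrightarrow> computable1 B \<Longrightarrow> decidable (\<lambda>x. A x \<le> B x)"
  unfolding decidable_def by (rule computable1_comp2[OF computable_le])

lemma decidable_less[computable_intros]: "computable1 A \<Longrightarrow> computable1 B \<Longrightarrow> decidable (\<lambda>x. A x < B x)"
  by (drule computable1_Suc, drule decidable_le) (simp_all add: Suc_le_eq)

lemma decidable_eq[computable_intros]: "computable1 A \<Longrightarrow> computable1 B \<Longrightarrow> decidable (\<lambda>x. A x = B x)"
proof -
  assume "computable1 A" "computable1 B"
  then have "computable1 (\<lambda>x. 1 - ((A x - B x) + (B x - A x)))"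
    by (intro computable1_minus computable1_add computable1_const)
  then show ?thesis unfolding decidable_def by (rule computable1_cong) auto
qed

lemma decidable_not[computable_intros]: "decidable P \<Longrightarrow> decidable (\<lambda>x. \<not> P x)"
proof -
  assume "decidable P"
  then have "computable1 (\<lambda>x. 1 - (if P x then 1 else 0))"
    unfolding decidable_def by (rule computable1_minus[OF computable1_const])
  then show ?thesis unfolding decidable_def by (rule computable1_cong) auto
qed

lemma decidable_conj[computable_intros]: "decidable P \<Longrightarrow> decidable Q \<Longrightarrow> decidable (\<lambda>x. P x \<and> Q x)"
proof -
  assume "decidable P" "decidable Q"
  then have "computable1 (\<lambda>x. if P x then (if Q x then 1 else 0) else 0)"
    by (intro computable1_if computable1_const) (auto simp: decidable_def)
  then show ?thesis unfolding decidable_def by (rule computable1_cong) auto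
qed

lemma decidable_disj[computable_intros]: "decidable P \<Longrightarrow> decidable Q \<Longrightarrow> decidable (\<lambda>x. P x \<or> Q x)"
  using decidable_not[OF decidable_conj[OF decidable_not decidable_not]] by simp

lemma computable1_rec_nat:
  assumes B: "computable1 B" and N: "computable1 N"
    and S: "computable1 (\<lambda>z. S (pfst z) (pfst (psnd z)) (psnd (psnd z)))"
  shows "computable1 (\<lambda>x. rec_nat (B x) (\<lambda>n r. S n r x) (N x))"
proof -
  have "computable 3 (\<lambda>zs. prod_encode (zs!1, prod_encode (zs!0, zs!2)))"
    by (intro computable_comp2[OF computable_prod_encode] computable_proj) auto
  from computable_comp_computable1[OF S this]
  have "computable (Suc (Suc 1)) (\<lambda>zs. S (zs!1) (zs!0) (zs!2))"
    by (simp add: numeral_3_eq_3)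
  from computable_rec_nat[OF B[unfolded computable1_def] this]
  have "computable 2 (\<lambda>xs. rec_nat (B (xs!1)) (\<lambda>n r. S n r (xs!1)) (xs!0))"
  proof (rule computable_cong)
    fix xs :: "nat list" assume "length xs = 2"
    then obtain a b where "xs = [a, b]" by (rule length_2E)
    then show "rec_nat (B (tl xs ! 0)) (\<lambda>k r. S ((r # k # tl xs) ! 1) ((r # k # tl xs) ! 0)
        ((r # k # tl xs) ! 2)) (hd xs) = rec_nat (B (xs!1)) (\<lambda>n r. S n r (xs!1)) (xs!0)"
      by simp
  qed simp
  from computable_comp2[OF this, of 1 "\<lambda>xs. N (xs!0)" "\<lambda>xs. xs!0"] show ?thesis
    using N by (simp add: computable1_def computable_proj)
qed

lemma computable1_mult[computable_intros]: "computable1 A \<Longrightarrow> computable1 B \<Longrightarrow> computable1 (\<lambda>x. A x * B x)"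
proof -
  assume A: "computable1 A" and B: "computable1 B"
  have "computable1 (\<lambda>x. rec_nat 0 (\<lambda>n r. r + B x) (A x))"
    by (rule computable1_rec_nat[where S="\<lambda>n r x. r + B x"])
      (intro computable1_const A computable1_add computable1_pfst computable1_psnd computable1_id
        computable1_comp[OF B])+
  moreover have "rec_nat 0 (\<lambda>n r. r + b) m = m * b" for m b :: nat
    by (induction m) auto
  ultimately show ?thesis by simp
qed

lemma computable1_power2[computable_intros]: "computable1 A \<Longrightarrow> computable1 (\<lambda>x. 2 ^ A x)"
proof -
  assume A: "computable1 A"
  have "computable1 (\<lambda>x. rec_nat 1 (\<lambda>n r. r + r) (A x))"
    by (rule computable1_rec_nat[where S="\<lambda>n r x. r + r"])
      (intro computable1_const A computable1_add computable1_pfst computable1_psnd computable1_id)+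
  moreover have "rec_nat 1 (\<lambda>n r. r + r) m = (2::nat) ^ m" for m
    by (induction m) auto
  ultimately show ?thesis by simp
qed

lemma computable1_max[computable_intros]: "computable1 A \<Longrightarrow> computable1 B \<Longrightarrow> computable1 (\<lambda>x. max (A x) (B x))"
  by (rule computable1_cong[OF computable1_if[OF decidable_le]]) (assumption+, simp add: max_def)

lemma computable1_uncurry2:
  "computable1 (\<lambda>z. F (pfst z) (psnd z)) \<Longrightarrow> computable1 A \<Longrightarrow> computable1 B
    \<Longrightarrow> computable1 (\<lambda>x. F (A x) (B x))"
  by (drule computable1_comp[OF _ computable1_prod_encode]) auto

lemma decidable_uncurry2:
  "decidable (\<lambda>z. P (pfst z) (psnd z)) \<Longrightarrow> computable1 A \<Longrightarrow> computable1 B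
    \<Longrightarrow> decidable (\<lambda>x. P (A x) (B x))"
  by (drule decidable_comp[OF _ computable1_prod_encode]) auto

lemma decidable_uncurry3:
  "decidable (\<lambda>z. P (pfst z) (pfst (psnd z)) (psnd (psnd z)))
    \<Longrightarrow> computable1 A \<Longrightarrow> computable1 B \<Longrightarrow> computable1 C \<Longrightarrow> decidable (\<lambda>x. P (A x) (B x) (C x))"
  by (drule decidable_comp[OF _ computable1_prod_encode[OF _ computable1_prod_encode]]) auto

lemma decidable_uncurry4:
  "decidable (\<lambda>z. P (pfst z) (pfst (psnd z)) (pfst (psnd (psnd z))) (psnd (psnd (psnd z))))
    \<Longrightarrow> computable1 A \<Longrightarrow> computable1 B \<Longrightarrow> computable1 C \<Longrightarrow> computable1 D
    \<Longrightarrow> decidable (\<lambda>x. P (A x) (B x) (C x) (D x))"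
  by (drule decidable_comp[OF _ computable1_prod_encode[OF _
        computable1_prod_encode[OF _ computable1_prod_encode]]]) auto


text \<open>In bounded quantification the bound variable y and the parameter x are passed as one pair.\<close>

lemma decidable_bex_less[computable_intros]:
  assumes P: "decidable (\<lambda>z. P (pfst z) (psnd z))" and B: "computable1 B"
  shows "decidable (\<lambda>x. \<exists>y<B x. P y x)"
proof -
  have "decidable (\<lambda>z. P (pfst z) (psnd (psnd z)))"
    by (rule decidable_uncurry2[OF P]) (rule computable_intros)+
  then have "computable1 (\<lambda>x. rec_nat 0 (\<lambda>n r. if P n x \<or> r \<noteq> 0 then 1 else 0) (B x))"
    by (intro computable1_rec_nat[OF computable1_const B]) (rule computable_intros | assumption)+
  moreover have "rec_nat 0 (\<lambda>n r. if P n x \<or> r \<noteq> 0 then 1 else 0) m = (if \<exists>y<m. P y x then 1 else 0)"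
    for m x by (induction m) (auto simp: less_Suc_eq)
  ultimately show ?thesis unfolding decidable_def by (rule computable1_cong)
qed

lemma decidable_ball_less[computable_intros]:
  "decidable (\<lambda>z. P (pfst z) (psnd z)) \<Longrightarrow> computable1 B \<Longrightarrow> decidable (\<lambda>x. \<forall>y<B x. P y x)"
  by (drule decidable_bex_less[OF decidable_not], assumption, drule decidable_not) simp

definition bounded_min :: "nat \<Rightarrow> (nat \<Rightarrow> bool) \<Rightarrow> nat" where
  "bounded_min B P = rec_nat 0 (\<lambda>m r. if r < m then r else if P m then m else Suc m) B"

lemma bounded_min_eq: "bounded_min B P = (if \<exists>y<B. P y then (LEAST y. P y) else B)"
proof (induction B)
  case (Suc B)
  have step: "bounded_min (Suc B) P =
      (if bounded_min B P < B then bounded_min B P else if P B then B else Suc B)"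
    by (simp add: bounded_min_def)
  show ?case
  proof (cases "\<exists>y<B. P y")
    case True
    then have "(LEAST y. P y) < B" by (meson Least_le le_less_trans)
    with True show ?thesis by (simp add: step Suc.IH) (meson less_SucI)
  next
    case False
    then have IH: "bounded_min B P = B" using Suc.IH by auto
    show ?thesis
    proof (cases "P B")
      case True
      then have "(LEAST y. P y) = B" using False by (metis Least_equality not_less)
      moreover have "\<exists>y<Suc B. P y" using True by blast
      ultimately show ?thesis using True by (simp add: step IH)
    next
      case not_PB: False
      then have "\<not> (\<exists>y<Suc B. P y)" using False less_Suc_eq by blast
      then show ?thesis using not_PB by (simp only: step IH if_not_P) simp
    qed
  qed
qed (simp add: bounded_min_def)

lemma computable1_bounded_min[computable_intros]:
  assumes P: "decidable (\<lambda>z. P (pfst z) (psnd z))" and B: "computable1 B"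
  shows "computable1 (\<lambda>x. bounded_min (B x) (\<lambda>y. P y x))"
proof -
  have P2: "decidable (\<lambda>z. P (pfst z) (psnd (psnd z)))"
    by (rule decidable_uncurry2[OF P]) (rule computable_intros)+
  have "computable1 (\<lambda>z. if pfst (psnd z) < pfst z then pfst (psnd z)
      else if P (pfst z) (psnd (psnd z)) then pfst z else Suc (pfst z))"
    by (rule computable1_if computable1_pfst computable1_psnd computable1_id decidable_less
        computable1_Suc P2)+
  then show ?thesis unfolding bounded_min_def
    by (rule computable1_rec_nat[OF computable1_const B])
qed


section \<open>Codes of lists\<close>

text \<open>Recall that list_encode [] = 0 and list_encode (x # xs) = Suc (prod_encode (x, list_encode xs)).\<close>

definition code_hd :: "nat \<Rightarrow> nat" where "code_hd c = pfst (c - 1)"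
definition code_tl :: "nat \<Rightarrow> nat" where "code_tl c = psnd (c - 1)"
definition code_drop :: "nat \<Rightarrow> nat \<Rightarrow> nat" where "code_drop i c = rec_nat c (\<lambda>n r. code_tl r) i"
definition code_nth :: "nat \<Rightarrow> nat \<Rightarrow> nat" where "code_nth c i = code_hd (code_drop i c)"
definition code_length :: "nat \<Rightarrow> nat" where
  "code_length c = bounded_min (Suc c) (\<lambda>n. code_drop n c = 0)"
definition code_member :: "nat \<Rightarrow> nat \<Rightarrow> bool" where
  "code_member v c \<longleftrightarrow> (\<exists>j<code_length c. code_nth c j = v)"

lemma code_tl_list_encode: "code_tl (list_encode xs) = list_encode (tl xs)"
proof -
  have "psnd 0 = 0" using psnd_prod_encode[of 0 0] by (simp add: prod_encode_def)
  then show ?thesis by (cases xs) (simp_all add: code_tl_def)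
qed

lemma code_drop_list_encode: "code_drop i (list_encode xs) = list_encode (drop i xs)"
  by (induction i) (simp_all add: code_drop_def code_tl_list_encode drop_Suc tl_drop)

lemma code_nth_list_encode: "i < length xs \<Longrightarrow> code_nth (list_encode xs) i = xs ! i"
  by (simp add: code_nth_def code_drop_list_encode Cons_nth_drop_Suc[symmetric] code_hd_def pfst_def)

lemma le_prod_encode_fst: "a \<le> prod_encode (a, b)"
  by (simp add: prod_encode_def)

lemma le_prod_encode_snd: "b \<le> prod_encode (a, b)"
proof -
  have "b \<le> triangle (a + b)" by (induction b) auto
  then show ?thesis by (simp add: prod_encode_def)
qed

lemma prod_encode_mono: "a \<le> a' \<Longrightarrow> b \<le> b' \<Longrightarrow> prod_encode (a, b) \<le> prod_encode (a', b')"
proof -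
  assume "a \<le> a'" "b \<le> b'"
  moreover have "triangle m \<le> triangle n" if "m \<le> n" for m n
    using that by (induction n rule: dec_induct) auto
  ultimately show ?thesis unfolding prod_encode_def by (simp add: add_mono)
qed

lemma pfst_le: "pfst z \<le> z"
  by (metis le_prod_encode_fst pfst_def prod.collapse prod_decode_inverse)

lemma psnd_le: "psnd z \<le> z"
  by (metis le_prod_encode_snd psnd_def prod.collapse prod_decode_inverse)

lemma length_le_list_encode: "length xs \<le> list_encode xs"
  by (induction xs) (auto intro: le_trans[OF _ le_prod_encode_snd])

lemma member_le_list_encode: "x \<in> set xs \<Longrightarrow> x \<le> list_encode xs"
proof (induction xs)
  case (Cons y xs)
  then show ?case
    using le_prod_encode_fst[of y "list_encode xs"] le_prod_encode_snd[of "list_encode xs" y] by auto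
qed simp

lemma code_length_list_encode: "code_length (list_encode xs) = length xs"
proof -
  have "code_drop n (list_encode xs) = 0 \<longleftrightarrow> length xs \<le> n" for n
    using list_encode_eq[of "drop n xs" "[]"] by (simp add: code_drop_list_encode)
  moreover have "(LEAST n. length xs \<le> n) = length xs"
    by (rule Least_equality) auto
  moreover have "length xs < Suc (list_encode xs)"
    using length_le_list_encode[of xs] by simp
  ultimately show ?thesis
    unfolding code_length_def bounded_min_eq by auto
qed

lemma code_member_list_encode: "code_member v (list_encode xs) \<longleftrightarrow> v \<in> set xs"
  by (auto simp: code_member_def code_length_list_encode code_nth_list_encode in_set_conv_nth)

lemma computable1_code_tl[computable_intros]: "computable1 A \<Longrightarrow> computable1 (\<lambda>x. code_tl (A x))"
  unfolding code_tl_def by (rule computable_intros | assumption)+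

lemma computable1_code_hd[computable_intros]: "computable1 A \<Longrightarrow> computable1 (\<lambda>x. code_hd (A x))"
  unfolding code_hd_def by (rule computable_intros | assumption)+

lemma computable1_code_drop[computable_intros]:
  "computable1 A \<Longrightarrow> computable1 B \<Longrightarrow> computable1 (\<lambda>x. code_drop (A x) (B x))"
  unfolding code_drop_def
  by (rule computable1_rec_nat[where S="\<lambda>n r x. code_tl r"]) (rule computable_intros | assumption)+

lemma computable1_code_nth[computable_intros]:
  "computable1 A \<Longrightarrow> computable1 B \<Longrightarrow> computable1 (\<lambda>x. code_nth (A x) (B x))"
  unfolding code_nth_def by (rule computable_intros | assumption)+

lemma computable1_code_length[computable_intros]:
  "computable1 A \<Longrightarrow> computable1 (\<lambda>x. code_length (A x))"
proof (rule computable1_comp[of code_length])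
  show "computable1 code_length"
    unfolding code_length_def by (rule computable_intros)+
qed

lemma decidable_code_member[computable_intros]:
  "computable1 A \<Longrightarrow> computable1 B \<Longrightarrow> decidable (\<lambda>x. code_member (A x) (B x))"
  unfolding code_member_def by (rule decidable_uncurry2) (rule computable_intros)+

definition code_bound :: "nat \<Rightarrow> nat \<Rightarrow> nat" where
  "code_bound m n = rec_nat 0 (\<lambda>k r. Suc (prod_encode (m, r))) n"

lemma list_encode_le_code_bound: "\<forall>y\<in>set xs. y \<le> m \<Longrightarrow> list_encode xs \<le> code_bound m (length xs)"
  by (induction xs) (auto simp: code_bound_def intro!: prod_encode_mono)

lemma code_bound_mono: "n \<le> n' \<Longrightarrow> code_bound m n \<le> code_bound m n'"
proof (induction n' rule: dec_induct)
  case (step n')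
  then show ?case using le_prod_encode_snd[of "code_bound m n'" m] by (simp add: code_bound_def)
qed simp

lemma computable1_code_bound[computable_intros]:
  "computable1 A \<Longrightarrow> computable1 B \<Longrightarrow> computable1 (\<lambda>x. code_bound (A x) (B x))"
proof (rule computable1_uncurry2[of code_bound])
  show "computable1 (\<lambda>z. code_bound (pfst z) (psnd z))"
    unfolding code_bound_def
    by (rule computable1_rec_nat[where S="\<lambda>k r z. Suc (prod_encode (pfst z, r))"])
      (rule computable_intros)+
qed


section \<open>Deciding acceptance by a coded automaton\<close>

definition is_run :: "(nat \<times> 'l \<times> nat) list \<Rightarrow> 'l list \<Rightarrow> nat list \<Rightarrow> bool" where
  "is_run T xs r \<longleftrightarrow> length r = Suc (length xs) \<and> (\<forall>i<length xs. (r!i, xs!i, r!Suc i) \<in> set T)"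

lemma is_run_Cons:
  "is_run T (a # xs) (q # r) \<longleftrightarrow> (q, a, r!0) \<in> set T \<and> is_run T xs r"
  by (auto simp: is_run_def All_less_Suc2)

lemma reach_iff_run:
  "q \<in> reach T Q xs \<longleftrightarrow> (\<exists>r. is_run T xs r \<and> r!0 \<in> Q \<and> r!length xs = q)"
proof (induction xs arbitrary: Q)
  case Nil
  show ?case
  proof
    assume "q \<in> reach T Q []"
    then show "\<exists>r. is_run T [] r \<and> r!0 \<in> Q \<and> r!length [] = q"
      by (intro exI[of _ "[q]"]) (simp add: is_run_def)
  qed (auto simp: is_run_def)
next
  case (Cons a xs)
  have "q \<in> reach T Q (a # xs) \<longleftrightarrow>
      (\<exists>r. is_run T xs r \<and> (\<exists>p\<in>Q. (p, a, r!0) \<in> set T) \<and> r!length xs = q)"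
    using Cons.IH by simp
  also have "\<dots> \<longleftrightarrow> (\<exists>r. is_run T (a # xs) r \<and> r!0 \<in> Q \<and> r!length (a # xs) = q)"
  proof
    assume "\<exists>r. is_run T xs r \<and> (\<exists>p\<in>Q. (p, a, r!0) \<in> set T) \<and> r!length xs = q"
    then obtain r p where "is_run T xs r" "p \<in> Q" "(p, a, r!0) \<in> set T" "r!length xs = q"
      by blast
    then show "\<exists>r. is_run T (a # xs) r \<and> r!0 \<in> Q \<and> r!length (a # xs) = q"
      by (intro exI[of _ "p # r"]) (simp add: is_run_Cons)
  next
    assume "\<exists>r. is_run T (a # xs) r \<and> r!0 \<in> Q \<and> r!length (a # xs) = q"
    then obtain r0 where r0: "is_run T (a # xs) r0" "r0!0 \<in> Q" "r0!length (a # xs) = q"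
      by blast
    then obtain p r where "r0 = p # r" by (cases r0) (auto simp: is_run_def)
    with r0 show "\<exists>r. is_run T xs r \<and> (\<exists>p\<in>Q. (p, a, r!0) \<in> set T) \<and> r!length xs = q"
      by (auto simp: is_run_Cons)
  qed
  finally show ?case .
qed

lemma accepts_iff_run:
  "accepts (I, F, T) xs \<longleftrightarrow> (\<exists>r. is_run T xs r \<and> r!0 \<in> set I \<and> r!length xs \<in> set F)"
proof -
  have "accepts (I, F, T) xs \<longleftrightarrow> (\<exists>q. q \<in> reach T (set I) xs \<and> q \<in> set F)"
    by (auto simp: accepts_def)
  then show ?thesis by (auto simp: reach_iff_run)
qed

text \<open>All states an automaton can reach are bounded by its code, so its accepting runs, if
  any, include one whose code is below a computable bound.\<close>

definition states_bounded :: "nat \<Rightarrow> 'l nfa \<Rightarrow> bool" where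
  "states_bounded N M \<longleftrightarrow> (\<forall>q\<in>set (fst M). q \<le> N) \<and> (\<forall>t\<in>set (snd (snd M)). snd (snd t) \<le> N)"

lemma states_bounded_mono: "states_bounded N M \<Longrightarrow> N \<le> N' \<Longrightarrow> states_bounded N' M"
  unfolding states_bounded_def by force

definition trans_code :: "('l \<Rightarrow> nat) \<Rightarrow> nat \<times> 'l \<times> nat \<Rightarrow> nat" where
  "trans_code e = (\<lambda>(p, a, q). prod_encode (p, prod_encode (e a, q)))"

lemma enc_nfa_eq: "enc_nfa e (I, F, T) =
    prod_encode (list_encode I, prod_encode (list_encode F, list_encode (map (trans_code e) T)))"
  by (simp add: enc_nfa_def trans_code_def)

lemma trans_code_mem_iff:
  assumes "inj e"
  shows "prod_encode (p, prod_encode (e a, q)) \<in> trans_code e ` set T \<longleftrightarrow> (p, a, q) \<in> set T"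
proof -
  have "inj (trans_code e)"
    using assms by (auto simp: inj_def trans_code_def dest: injD)
  then show ?thesis using inj_image_mem_iff[of "trans_code e" "(p, a, q)"] by (simp add: trans_code_def)
qed

lemma states_bounded_enc_nfa: "states_bounded (enc_nfa e M) M"
proof -
  obtain I F T where M: "M = (I, F, T)" by (cases M) auto
  have "q \<le> enc_nfa e M" if "q \<in> set I" for q
  proof -
    have "q \<le> list_encode I" using that by (rule member_le_list_encode)
    also have "\<dots> \<le> enc_nfa e M" by (simp add: M enc_nfa_eq le_prod_encode_fst)
    finally show ?thesis .
  qed
  moreover have "q \<le> enc_nfa e M" if "(p, a, q) \<in> set T" for p a q
  proof -
    have "q \<le> trans_code e (p, a, q)"
      unfolding trans_code_def by (simp add: order_trans[OF le_prod_encode_snd le_prod_encode_snd])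
    also have "\<dots> \<le> list_encode (map (trans_code e) T)"
      using that by (intro member_le_list_encode) auto
    also have "\<dots> \<le> enc_nfa e M"
      by (simp add: M enc_nfa_eq order_trans[OF le_prod_encode_snd le_prod_encode_snd])
    finally show ?thesis .
  qed
  ultimately show ?thesis by (force simp: states_bounded_def M)
qed

lemma run_states_bounded:
  assumes N: "states_bounded N (I, F, T)" and r: "is_run T xs r" "r!0 \<in> set I"
  shows "\<forall>q\<in>set r. q \<le> N"
proof
  fix q assume "q \<in> set r"
  then obtain j where j: "j < length r" "q = r!j" by (auto simp: in_set_conv_nth)
  show "q \<le> N"
  proof (cases j)
    case 0 then show ?thesis using N r j by (simp add: states_bounded_def)
  next
    case (Suc i)
    then have "(r!i, xs!i, q) \<in> set T" using r j by (simp add: is_run_def)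
    moreover have "\<forall>t\<in>set T. snd (snd t) \<le> N" using N by (simp add: states_bounded_def)
    ultimately show ?thesis by fastforce
  qed
qed

text \<open>accepting_run_code c n l r: r codes an accepting run of the automaton coded by c on the
  word of length n whose i-th letter has code l i.\<close>

definition accepting_run_code :: "nat \<Rightarrow> nat \<Rightarrow> (nat \<Rightarrow> nat) \<Rightarrow> nat \<Rightarrow> bool" where
  "accepting_run_code c n l r \<longleftrightarrow> code_length r = Suc n
      \<and> code_member (code_nth r 0) (pfst c) \<and> code_member (code_nth r n) (pfst (psnd c))
      \<and> (\<forall>i<n. code_member (prod_encode (code_nth r i, prod_encode (l i, code_nth r (Suc i))))
                (psnd (psnd c)))"

definition nfa_code_accepts :: "nat \<Rightarrow> nat \<Rightarrow> (nat \<Rightarrow> nat) \<Rightarrow> bool" where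
  "nfa_code_accepts c n l \<longleftrightarrow> (\<exists>r<Suc (code_bound c (Suc n)). accepting_run_code c n l r)"

lemma accepting_run_code_enc_nfa:
  assumes "inj e"
  shows "accepting_run_code (enc_nfa e (I, F, T)) (length xs) (\<lambda>i. e (xs!i)) (list_encode r)
    \<longleftrightarrow> is_run T xs r \<and> r!0 \<in> set I \<and> r!length xs \<in> set F"
proof (cases "length r = Suc (length xs)")
  case True
  then have "\<forall>i\<le>length xs. code_nth (list_encode r) i = r!i"
    by (simp add: code_nth_list_encode)
  then show ?thesis
    using True
    by (simp add: accepting_run_code_def code_length_list_encode is_run_def enc_nfa_eq
        code_member_list_encode trans_code_mem_iff[OF assms]) blast
qed (simp add: accepting_run_code_def code_length_list_encode is_run_def)

lemma nfa_code_accepts_enc_nfa: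
  assumes e: "inj e"
  shows "nfa_code_accepts (enc_nfa e M) (length xs) (\<lambda>i. e (xs!i)) \<longleftrightarrow> accepts M xs"
proof -
  obtain I F T where M: "M = (I, F, T)" by (cases M) auto
  let ?c = "enc_nfa e M"
  show ?thesis
  proof
    assume "nfa_code_accepts ?c (length xs) (\<lambda>i. e (xs!i))"
    then obtain r where "accepting_run_code ?c (length xs) (\<lambda>i. e (xs!i)) (list_encode r)"
      unfolding nfa_code_accepts_def by (metis list_decode_inverse)
    then show "accepts M xs"
      unfolding M accepting_run_code_enc_nfa[OF e] accepts_iff_run by blast
  next
    assume "accepts M xs"
    then obtain r where r: "is_run T xs r" "r!0 \<in> set I" "r!length xs \<in> set F"
      unfolding M accepts_iff_run by blast
    have "states_bounded ?c (I, F, T)" using states_bounded_enc_nfa[of e M] by (simp add: M)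
    then have "\<forall>q\<in>set r. q \<le> ?c" using run_states_bounded r(1,2) by blast
    then have "list_encode r < Suc (code_bound ?c (Suc (length xs)))"
      using list_encode_le_code_bound[of r ?c] r(1) by (simp add: is_run_def)
    moreover have "accepting_run_code ?c (length xs) (\<lambda>i. e (xs!i)) (list_encode r)"
      unfolding M accepting_run_code_enc_nfa[OF e] using r by blast
    ultimately show "nfa_code_accepts ?c (length xs) (\<lambda>i. e (xs!i))"
      unfolding nfa_code_accepts_def by blast
  qed
qed

definition code_accepts_word :: "nat \<Rightarrow> nat \<Rightarrow> bool" where
  "code_accepts_word c w \<longleftrightarrow> nfa_code_accepts c (code_length w) (code_nth w)"

text \<open>The code of the i-th letter of a padded pair, as in enc_opt: 0 stands for the padding symbol.\<close>

definition code_padded_nth :: "nat \<Rightarrow> nat \<Rightarrow> nat" where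
  "code_padded_nth u i = (if i < code_length u then Suc (code_nth u i) else 0)"

definition code_accepts_pair :: "nat \<Rightarrow> nat \<Rightarrow> nat \<Rightarrow> bool" where
  "code_accepts_pair c u v \<longleftrightarrow> nfa_code_accepts c (max (code_length u) (code_length v))
      (\<lambda>i. prod_encode (code_padded_nth u i, code_padded_nth v i))"

lemma decidable_code_accepts_word[computable_intros]:
  "computable1 A \<Longrightarrow> computable1 B \<Longrightarrow> decidable (\<lambda>x. code_accepts_word (A x) (B x))"
proof (rule decidable_uncurry2[of code_accepts_word])
  show "decidable (\<lambda>z. code_accepts_word (pfst z) (psnd z))"
    unfolding code_accepts_word_def nfa_code_accepts_def accepting_run_code_def
    by (rule computable_intros)+
qed

lemma decidable_code_accepts_pair[computable_intros]:
  "computable1 A \<Longrightarrow> computable1 B \<Longrightarrow> computable1 C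
    \<Longrightarrow> decidable (\<lambda>x. code_accepts_pair (A x) (B x) (C x))"
proof (rule decidable_uncurry3[of code_accepts_pair])
  show "decidable (\<lambda>z. code_accepts_pair (pfst z) (pfst (psnd z)) (psnd (psnd z)))"
    unfolding code_accepts_pair_def nfa_code_accepts_def accepting_run_code_def code_padded_nth_def
    by (rule computable_intros)+
qed

lemma code_accepts_word_enc_nfa:
  "code_accepts_word (enc_nfa id M) (list_encode w) \<longleftrightarrow> accepts M w"
  using nfa_code_accepts_enc_nfa[of id M w]
  by (simp add: code_accepts_word_def code_length_list_encode code_nth_list_encode
      nfa_code_accepts_def accepting_run_code_def cong: conj_cong)

lemma length_conv[simp]: "length (conv u v) = max (length u) (length v)"
  by (simp add: conv_def)

lemma nth_conv: "i < max (length u) (length v) \<Longrightarrow> conv u v ! i =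
   (if i < length u then Some (u ! i) else None, if i < length v then Some (v ! i) else None)"
  by (simp add: conv_def)

lemma inj_enc_pletter: "inj enc_pletter"
  by (rule injI) (auto simp: enc_pletter_def enc_opt_def prod_eq_iff split: option.splits)

lemma code_accepts_pair_enc_nfa:
  "code_accepts_pair (enc_nfa enc_pletter M) (list_encode u) (list_encode v) \<longleftrightarrow> accepts M (conv u v)"
proof -
  have "prod_encode (code_padded_nth (list_encode u) i, code_padded_nth (list_encode v) i)
      = enc_pletter (conv u v ! i)" if "i < max (length u) (length v)" for i
    using that by (simp add: nth_conv code_padded_nth_def code_nth_list_encode code_length_list_encode
        enc_pletter_def enc_opt_def)
  then show ?thesis
    using nfa_code_accepts_enc_nfa[OF inj_enc_pletter, of M "conv u v"]
    by (simp add: code_accepts_pair_def code_length_list_encode nfa_code_accepts_def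
        accepting_run_code_def cong: conj_cong)
qed


section \<open>A length bound for common witnesses of automata\<close>

definition nfa_states :: "'l nfa \<Rightarrow> 'l list \<Rightarrow> nat set" where
  "nfa_states M w = reach (snd (snd M)) (set (fst M)) w"

lemma reach_append: "reach T Q (x @ y) = reach T (reach T Q x) y"
  by (induction x arbitrary: Q) auto

lemma nfa_states_append_cong:
  "nfa_states M x = nfa_states M y \<Longrightarrow> nfa_states M (x @ z) = nfa_states M (y @ z)"
  by (simp add: nfa_states_def reach_append)

lemma accepts_iff_nfa_states: "accepts M w \<longleftrightarrow> nfa_states M w \<inter> set (fst (snd M)) \<noteq> {}"
  by (cases M) (simp add: accepts_def nfa_states_def)

lemma nfa_states_bounded: "states_bounded N M \<Longrightarrow> nfa_states M w \<subseteq> {0..N}"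
proof -
  have "q \<in> reach T Q w \<Longrightarrow> q \<in> Q \<or> (\<exists>t\<in>set T. snd (snd t) = q)" for T Q q
    by (induction w arbitrary: Q) force+
  then show "states_bounded N M \<Longrightarrow> nfa_states M w \<subseteq> {0..N}"
    unfolding states_bounded_def nfa_states_def by fastforce
qed

lemma conv_append:
  "length v \<le> length u \<Longrightarrow> conv (u @ s) v = conv u v @ map (\<lambda>b. (Some b, None)) s"
  by (rule nth_equalityI) (auto simp: nth_conv nth_append max_def split: if_splits)

lemma nfa_states_conv_append_cong:
  assumes "length v \<le> length x" "length v \<le> length y"
    and "nfa_states M (conv x v) = nfa_states M (conv y v)"
  shows "nfa_states M (conv (x @ z) v) = nfa_states M (conv (y @ z) v)"
  using assms nfa_states_append_cong[of M "conv x v" "conv y v" "map (\<lambda>b. (Some b, None)) z"]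
  by (simp add: conv_append)

text \<open>Once a prefix of w is longer than all the words vs ! a, the remaining letters of w are
  read against padding only, so the automata are in the configuration given by the tuple of
  their state sets, of which there are at most 2 ^ ((k + 1) * (N + 1)). Cutting out the part
  between two equal configurations shortens w.\<close>

lemma short_common_witness:
  fixes M0 :: "nat nfa" and Ms :: "pletter nfa list" and vs :: "nat list list"
  assumes bounded: "states_bounded N M0" "\<And>a. a < k \<Longrightarrow> states_bounded N (Ms ! a)"
    and short: "\<And>a. a < k \<Longrightarrow> length (vs ! a) \<le> m"
    and witness: "accepts M0 w" "\<forall>a<k. accepts (Ms ! a) (conv w (vs ! a))"
  shows "\<exists>w'. accepts M0 w' \<and> (\<forall>a<k. accepts (Ms ! a) (conv w' (vs ! a)))
    \<and> length w' \<le> m + 2 ^ ((k + 1) * (N + 1))"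
  using witness
proof (induction "length w" arbitrary: w rule: less_induct)
  case less
  let ?D = "(k + 1) * (N + 1)"
  define cfg where "cfg z = {(0, q) | q. q \<in> nfa_states M0 z}
      \<union> {(Suc a, q) | a q. a < k \<and> q \<in> nfa_states (Ms ! a) (conv z (vs ! a))}" for z
  show ?case
  proof (cases "length w \<le> m + 2 ^ ?D")
    case False
    have "cfg z \<in> Pow ({0..k} \<times> {0..N})" for z
      using nfa_states_bounded[OF bounded(1)] nfa_states_bounded[OF bounded(2)]
      unfolding cfg_def by fastforce
    moreover have "card (Pow ({0..k} \<times> {0..N})) = 2 ^ ?D"
      by (simp add: card_Pow card_cartesian_product)
    moreover have "card {m..length w} > 2 ^ ?D" using False by simp
    ultimately have "\<not> inj_on (\<lambda>j. cfg (take j w)) {m..length w}"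
      by (metis card_inj_on_le finite_Pow_iff finite_SigmaI finite_atLeastAtMost image_subsetI
          not_le)
    then obtain i j where ij: "m \<le> i" "i < j" "j \<le> length w" "cfg (take i w) = cfg (take j w)"
      unfolding inj_on_def by (metis atLeastAtMost_iff linorder_neqE_nat)
    define w' where "w' = take i w @ drop j w"
    have "nfa_states M0 (take i w) = nfa_states M0 (take j w)"
      using ij(4) unfolding cfg_def by (auto simp: set_eq_iff)
    then have "nfa_states M0 w' = nfa_states M0 w"
      using nfa_states_append_cong[of M0 "take i w" "take j w" "drop j w"] by (simp add: w'_def)
    moreover have "nfa_states (Ms ! a) (conv w' (vs ! a)) = nfa_states (Ms ! a) (conv w (vs ! a))"
      if a: "a < k" for a
    proof -
      have "length (vs ! a) \<le> length (take i w)" "length (vs ! a) \<le> length (take j w)"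
        using short[OF a] ij by auto
      moreover have "nfa_states (Ms ! a) (conv (take i w) (vs ! a))
          = nfa_states (Ms ! a) (conv (take j w) (vs ! a))"
        using ij(4) a unfolding cfg_def by (auto simp: set_eq_iff)
      ultimately have "nfa_states (Ms ! a) (conv (take i w @ drop j w) (vs ! a))
          = nfa_states (Ms ! a) (conv (take j w @ drop j w) (vs ! a))"
        by (rule nfa_states_conv_append_cong)
      then show ?thesis by (simp add: w'_def)
    qed
    ultimately have "accepts M0 w' \<and> (\<forall>a<k. accepts (Ms ! a) (conv w' (vs ! a)))"
      using less.prems by (simp add: accepts_iff_nfa_states)
    moreover have "length w' < length w" using ij by (simp add: w'_def)
    ultimately show ?thesis using less.hyps by blast
  qed (use less.prems in blast)
qed


section \<open>Words over generators of a semigroup\<close>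

lemma word_val_snoc: "w \<noteq> [] \<Longrightarrow> word_val f g (w @ [b]) = f (word_val f g w) (g b)"
  by (cases w) auto

lemma word_val_append_cong:
  "x \<noteq> [] \<Longrightarrow> y \<noteq> [] \<Longrightarrow> word_val f g x = word_val f g y
    \<Longrightarrow> word_val f g (x @ w) = word_val f g (y @ w)"
  by (cases x; cases y) auto

lemma word_val_closed:
  assumes "semigroup_on S f" "g ` set w \<subseteq> S" "w \<noteq> []"
  shows "word_val f g w \<in> S"
  using assms(2,3)
proof (induction w rule: rev_induct)
  case (snoc b w)
  then show ?case
    using assms(1) by (cases "w = []") (auto simp: word_val_snoc semigroup_on_def)
qed simp

lemma word_val_append:
  assumes S: "semigroup_on S f" and g: "g ` set (u @ v) \<subseteq> S" and ne: "u \<noteq> []" "v \<noteq> []"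
  shows "word_val f g (u @ v) = f (word_val f g u) (word_val f g v)"
  using g ne(2)
proof (induction v rule: rev_induct)
  case (snoc b v)
  show ?case
  proof (cases "v = []")
    case False
    then have "word_val f g (u @ v @ [b]) = f (f (word_val f g u) (word_val f g v)) (g b)"
      using snoc ne(1) by (simp add: word_val_snoc[of "u @ v", simplified])
    also have "\<dots> = f (word_val f g u) (f (word_val f g v) (g b))"
    proof -
      have "word_val f g u \<in> S" "word_val f g v \<in> S" "g b \<in> S"
        using word_val_closed[OF S] snoc.prems ne(1) False by auto
      then show ?thesis using S by (simp add: semigroup_on_def)
    qed
    finally show ?thesis using False by (simp add: word_val_snoc)
  qed (simp add: word_val_snoc ne)
qed simp

lemma word_val_left_unit:
  assumes S: "semigroup_on S f" and "e \<in> S" "g ` set w \<subseteq> S" "w \<noteq> []"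
    and unit: "\<forall>b\<in>set w. f e (g b) = g b"
  shows "f e (word_val f g w) = word_val f g w"
  using assms(3-5)
proof (induction w)
  case (Cons b w)
  show ?case
  proof (cases "w = []")
    case False
    have w: "word_val f g w \<in> S" "g b \<in> S"
      using word_val_closed[OF S, of g w] Cons.prems False by auto
    have eq: "word_val f g (b # w) = f (g b) (word_val f g w)"
      using word_val_append[OF S, of g "[b]" w] Cons.prems False by simp
    have "f e (f (g b) (word_val f g w)) = f (f e (g b)) (word_val f g w)"
      using S w \<open>e \<in> S\<close> by (simp add: semigroup_on_def)
    then show ?thesis unfolding eq using Cons.prems by simp
  qed (use Cons.prems in simp)
qed simp

lemma word_val_right_unit:
  assumes S: "semigroup_on S f" and "e \<in> S" "g ` set w \<subseteq> S" "w \<noteq> []"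
    and unit: "\<forall>b\<in>set w. f (g b) e = g b"
  shows "f (word_val f g w) e = word_val f g w"
  using assms(3-5)
proof (induction w rule: rev_induct)
  case (snoc b w)
  show ?case
  proof (cases "w = []")
    case False
    have w: "word_val f g w \<in> S" "g b \<in> S"
      using word_val_closed[OF S, of g w] snoc.prems False by auto
    have "f (word_val f g (w @ [b])) e = f (word_val f g w) (f (g b) e)"
      using S w \<open>e \<in> S\<close> False by (simp add: word_val_snoc semigroup_on_def)
    then show ?thesis using snoc.prems False by (simp add: word_val_snoc)
  qed (use snoc.prems in simp)
qed simp

lemma monoid_record_iff:
  assumes "semigroup_on S f"
  shows "monoid \<lparr>carrier = S, mult = f, one = e\<rparr> \<longleftrightarrow> e \<in> S \<and> (\<forall>y\<in>S. f e y = y \<and> f y e = y)"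
  using assms unfolding monoid_def semigroup_on_def by auto

lemma map_fst_conv: "map fst (conv u v) = map Some u @ replicate (length v - length u) None"
  by (rule nth_equalityI) (auto simp: nth_conv nth_append)

lemma map_snd_conv: "map snd (conv u v) = map Some v @ replicate (length u - length v) None"
  by (rule nth_equalityI) (auto simp: nth_conv nth_append)

lemma unpad_map_Some: "map the (takeWhile (\<lambda>x. x \<noteq> None) (map Some u @ replicate n None)) = u"
  by (induction u) (cases n, simp_all)

lemma conv_inj: "conv u v = conv u' v' \<Longrightarrow> u = u' \<and> v = v'"
  by (metis map_fst_conv map_snd_conv unpad_map_Some)

lemma sync_recognises_accepts:
  "sync_recognises M R \<Longrightarrow> accepts M (conv u v) \<Longrightarrow> (u, v) \<in> R"
  unfolding sync_recognises_def lang_def by (auto dest: conv_inj)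


section \<open>The decision procedure\<close>

definition in_k :: "nat \<Rightarrow> nat" where "in_k x = pfst x"
definition in_M_L :: "nat \<Rightarrow> nat" where "in_M_L x = pfst (psnd x)"
definition in_M_eq :: "nat \<Rightarrow> nat" where "in_M_eq x = pfst (psnd (psnd x))"
definition in_M_a :: "nat \<Rightarrow> nat" where "in_M_a x = pfst (psnd (psnd (psnd x)))"
definition in_iota :: "nat \<Rightarrow> nat" where "in_iota x = psnd (psnd (psnd (psnd x)))"

lemmas input_defs = in_k_def in_M_L_def in_M_eq_def in_M_a_def in_iota_def

definition left_unit_test :: "nat \<Rightarrow> nat \<Rightarrow> bool" where
  "left_unit_test x w \<longleftrightarrow> code_accepts_word (in_M_L x) w
     \<and> (\<forall>a<in_k x. code_accepts_pair (code_nth (in_M_a x) a) w (code_nth (in_iota x) a))"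

text \<open>By short_common_witness with N = x, which bounds all states, and m = in_iota x, which
  bounds the lengths of the words iota ! a, a shortest word passing left_unit_test has code
  at most search_bound x.\<close>

definition search_bound :: "nat \<Rightarrow> nat" where
  "search_bound x = code_bound (in_k x) (in_iota x + 2 ^ ((in_k x + 1) * (x + 1)))"

definition has_left_unit :: "nat \<Rightarrow> bool" where
  "has_left_unit x \<longleftrightarrow> (\<exists>w<Suc (search_bound x). left_unit_test x w)"

definition least_left_unit :: "nat \<Rightarrow> nat" where
  "least_left_unit x = bounded_min (Suc (search_bound x)) (left_unit_test x)"

text \<open>A chain for the letter a along w codes words u_0 = iota ! a, u_1, ..., u_(length w) with
  (u_j, u_(j+1)) in L_(w ! j), so that u_(length w) represents (iota ! a) w.\<close>

definition valid_chain :: "nat \<Rightarrow> nat \<Rightarrow> nat \<Rightarrow> nat \<Rightarrow> bool" where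
  "valid_chain x w a ch \<longleftrightarrow> code_length ch = Suc (code_length w)
     \<and> code_nth ch 0 = code_nth (in_iota x) a
     \<and> (\<forall>j<code_length w. code_accepts_pair (code_nth (in_M_a x) (code_nth w j))
            (code_nth ch j) (code_nth ch (Suc j)))"

definition valid_certificate :: "nat \<Rightarrow> nat \<Rightarrow> nat \<Rightarrow> bool" where
  "valid_certificate x w c \<longleftrightarrow>
     code_length c = in_k x \<and> (\<forall>a<in_k x. valid_chain x w a (code_nth c a))"

definition right_unit_test :: "nat \<Rightarrow> nat \<Rightarrow> nat \<Rightarrow> bool" where
  "right_unit_test x w c \<longleftrightarrow>
     (\<forall>a<in_k x. code_accepts_pair (in_M_eq x) (code_nth (code_nth c a) (code_length w))
        (code_nth (in_iota x) a))"

text \<open>When x has no left unit the search stops at c = 0; otherwise c must be a certificate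
  for the least left unit.\<close>

definition certificate_found :: "nat \<Rightarrow> nat \<Rightarrow> bool" where
  "certificate_found c x \<longleftrightarrow> \<not> has_left_unit x \<or> valid_certificate x (least_left_unit x) c"

definition decision :: "nat \<Rightarrow> nat \<Rightarrow> nat" where
  "decision c x = (if has_left_unit x \<and> right_unit_test x (least_left_unit x) c
     then Suc (least_left_unit x) else 0)"

lemma decidable_left_unit_test[computable_intros]:
  "computable1 A \<Longrightarrow> computable1 B \<Longrightarrow> decidable (\<lambda>x. left_unit_test (A x) (B x))"
proof (rule decidable_uncurry2[of left_unit_test])
  show "decidable (\<lambda>z. left_unit_test (pfst z) (psnd z))"
    unfolding left_unit_test_def input_defs by (rule computable_intros)+
qed

lemma decidable_has_left_unit[computable_intros]:
  "computable1 A \<Longrightarrow> decidable (\<lambda>x. has_left_unit (A x))"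
proof (rule decidable_comp[of has_left_unit])
  show "decidable has_left_unit"
    unfolding has_left_unit_def search_bound_def input_defs by (rule computable_intros)+
qed

lemma computable1_least_left_unit[computable_intros]:
  "computable1 A \<Longrightarrow> computable1 (\<lambda>x. least_left_unit (A x))"
proof (rule computable1_comp[of least_left_unit])
  show "computable1 least_left_unit"
    unfolding least_left_unit_def search_bound_def input_defs by (rule computable_intros)+
qed

lemma decidable_valid_chain[computable_intros]:
  "computable1 A \<Longrightarrow> computable1 B \<Longrightarrow> computable1 C \<Longrightarrow> computable1 D
    \<Longrightarrow> decidable (\<lambda>x. valid_chain (A x) (B x) (C x) (D x))"
proof (rule decidable_uncurry4[of valid_chain])
  show "decidable (\<lambda>z. valid_chain (pfst z) (pfst (psnd z)) (pfst (psnd (psnd z))) (psnd (psnd (psnd z))))"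
    unfolding valid_chain_def input_defs by (rule computable_intros)+
qed

lemma unbounded_search_program:
  assumes Q: "decidable (\<lambda>z. Q (pfst z) (psnd z))" and H: "computable1 (\<lambda>z. H (pfst z) (psnd z))"
  shows "\<exists>P. \<forall>x. (\<exists>c. Q c x) \<longrightarrow> eval P [x] (H (LEAST c. Q c x) x)"
proof -
  have "computable 2 (\<lambda>xs. 1 - (if Q (pfst (prod_encode (xs!0, xs!1))) (psnd (prod_encode (xs!0, xs!1)))
      then 1 else 0))"
    by (rule computable_comp2[OF computable_minus computable_const
          computable_comp_computable1[OF Q[unfolded decidable_def] computable_prod_encode]])
  then obtain PQ where PQ: "\<And>xs. length xs = 2 \<Longrightarrow> eval PQ xs (1 - (if Q (xs!0) (xs!1) then 1 else 0))"
    unfolding computable_def by auto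
  obtain PH where PH: "\<And>xs. length xs = 1 \<Longrightarrow> eval PH xs (H (pfst (xs!0)) (psnd (xs!0)))"
    using H unfolding computable1_def computable_def by auto
  obtain PE where PE: "\<And>xs. length xs = 2 \<Longrightarrow> eval PE xs (prod_encode (xs!0, xs!1))"
    using computable_prod_encode unfolding computable_def by auto
  have "eval (Comp PH [Comp PE [Mu PQ, Proj 0]]) [x] (H (LEAST c. Q c x) x)" if "\<exists>c. Q c x" for x
  proof -
    let ?n = "LEAST c. Q c x"
    have mu: "eval (Mu PQ) [x] ?n"
    proof (rule ev_Mu)
      show "eval PQ [?n, x] 0" using PQ[of "[?n, x]"] LeastI_ex[OF that] by simp
      show "\<forall>m<?n. \<exists>y. eval PQ [m, x] (Suc y)"
      proof (intro allI impI exI[of _ 0])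
        fix m assume "m < ?n"
        then have "\<not> Q m x" by (rule not_less_Least)
        then show "eval PQ [m, x] (Suc 0)" using PQ[of "[m, x]"] by simp
      qed
    qed
    have "eval (Comp PE [Mu PQ, Proj 0]) [x] (prod_encode (?n, x))"
      by (rule ev_Comp[where ys="[?n, x]"])
        (use mu PE[of "[?n, x]"] in \<open>auto simp: less_Suc_eq intro: ev_Proj[of 0 "[x]", simplified]\<close>)
    then show ?thesis
      by (intro ev_Comp[where ys="[prod_encode (?n, x)]"]) (use PH[of "[prod_encode (?n, x)]"] in auto)
  qed
  then show ?thesis by blast
qed

lemma decision_program:
  "\<exists>P. \<forall>x. (\<exists>c. certificate_found c x) \<longrightarrow> eval P [x] (decision (LEAST c. certificate_found c x) x)"
proof (rule unbounded_search_program)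
  show "decidable (\<lambda>z. certificate_found (pfst z) (psnd z))"
    unfolding certificate_found_def valid_certificate_def input_defs by (rule computable_intros)+
  show "computable1 (\<lambda>z. decision (pfst z) (psnd z))"
    unfolding decision_def right_unit_test_def input_defs by (rule computable_intros)+
qed


section \<open>Correctness of the decision procedure\<close>

definition is_chain :: "pletter nfa list \<Rightarrow> nat list \<Rightarrow> nat list list \<Rightarrow> bool" where
  "is_chain M_a w us \<longleftrightarrow> length us = Suc (length w)
     \<and> (\<forall>j<length w. accepts (M_a ! (w ! j)) (conv (us ! j) (us ! Suc j)))"

lemma is_chain_Cons: "is_chain M_a (b # w) (u # us) \<longleftrightarrow>
    accepts (M_a ! b) (conv u (us ! 0)) \<and> is_chain M_a w us"
  by (auto simp: is_chain_def All_less_Suc2)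

locale described_semigroup =
  fixes k :: nat and M_L :: "nat nfa" and M_eq :: "pletter nfa" and M_a :: "pletter nfa list"
    and iota :: "nat list list" and S :: "'a set" and f :: "'a \<Rightarrow> 'a \<Rightarrow> 'a" and g :: "nat \<Rightarrow> 'a"
  assumes semigroup: "semigroup_on S f" and describes: "describes (k, M_L, M_eq, M_a) iota S f g"
begin

abbreviation "L \<equiv> lang M_L"
abbreviation "\<sigma> \<equiv> word_val f g"
abbreviation "input \<equiv> enc_input (k, M_L, M_eq, M_a) iota"

lemma L_letters: "w \<in> L \<Longrightarrow> set w \<subseteq> {..<k}"
  and length_M_a: "length M_a = k"
  and M_a_relation: "a < k \<Longrightarrow> \<exists>R. R \<subseteq> L \<times> L \<and> sync_recognises (M_a ! a) R"
  using describes by (auto simp: describes_def pre_automatic_def)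

lemma length_iota: "length iota = k"
  and iota_in_L: "a < k \<Longrightarrow> iota ! a \<in> L"
  using describes by (auto simp: describes_def assignment_def L_of_def)

lemma g_in_S: "a < k \<Longrightarrow> g a \<in> S"
  and Nil_notin_L: "[] \<notin> L"
  and word_val_L: "\<sigma> ` L = S"
  and M_eq_iff: "u \<in> L \<Longrightarrow> v \<in> L \<Longrightarrow> accepts M_eq (conv u v) \<longleftrightarrow> \<sigma> u = \<sigma> v"
  and M_a_iff: "a < k \<Longrightarrow> u \<in> L \<Longrightarrow> v \<in> L \<Longrightarrow> accepts (M_a ! a) (conv u v) \<longleftrightarrow> \<sigma> (u @ [a]) = \<sigma> v"
  and g_eq: "a < k \<Longrightarrow> g a = \<sigma> (iota ! a)"
  using describes
  by (auto simp: describes_def is_interpretation_def consistent_def L_of_def Leq_of_def La_of_def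
      sync_rel_def alph_def)

lemma M_a_in_L: "a < k \<Longrightarrow> accepts (M_a ! a) (conv u v) \<Longrightarrow> u \<in> L \<and> v \<in> L"
  using M_a_relation sync_recognises_accepts by blast

lemma generators_in_S: "set w \<subseteq> {..<k} \<Longrightarrow> g ` set w \<subseteq> S"
  using g_in_S by auto

lemma left_unit_of_generators:
  assumes "e \<in> S" "\<forall>a<k. f e (g a) = g a" "y \<in> S"
  shows "f e y = y"
proof -
  obtain u where u: "u \<in> L" "y = \<sigma> u" using assms(3) word_val_L by auto
  then have "u \<noteq> []" "set u \<subseteq> {..<k}" using Nil_notin_L L_letters by auto
  moreover have "\<forall>b\<in>set u. f e (g b) = g b" using assms(2) calculation by auto
  ultimately show ?thesis
    using word_val_left_unit[OF semigroup assms(1) generators_in_S] u by simp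
qed

lemma right_unit_of_generators:
  assumes "e \<in> S" "\<forall>a<k. f (g a) e = g a" "y \<in> S"
  shows "f y e = y"
proof -
  obtain u where u: "u \<in> L" "y = \<sigma> u" using assms(3) word_val_L by auto
  then have "u \<noteq> []" "set u \<subseteq> {..<k}" using Nil_notin_L L_letters by auto
  moreover have "\<forall>b\<in>set u. f (g b) e = g b" using assms(2) calculation by auto
  ultimately show ?thesis
    using word_val_right_unit[OF semigroup assms(1) generators_in_S] u by simp
qed

definition left_unit_word :: "nat list \<Rightarrow> bool" where
  "left_unit_word w \<longleftrightarrow> w \<in> L \<and> (\<forall>a<k. f (\<sigma> w) (g a) = g a)"

lemma monoid_imp_left_unit_word:
  assumes "monoid \<lparr>carrier = S, mult = f, one = e\<rparr>"
  shows "\<exists>w. left_unit_word w"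
proof -
  have "e \<in> S" "\<forall>y\<in>S. f e y = y" using assms monoid_record_iff[OF semigroup] by auto
  then obtain w where "w \<in> L" "\<sigma> w = e" using word_val_L by (metis imageE)
  then show ?thesis using \<open>\<forall>y\<in>S. f e y = y\<close> g_in_S by (auto simp: left_unit_word_def)
qed

text \<open>A left unit e of the generators is a left identity of S; so S is a monoid iff e is
  also a right identity, since then any identity equals e.\<close>

lemma monoid_iff_right_unit:
  assumes w: "left_unit_word w"
  shows "(\<exists>e. monoid \<lparr>carrier = S, mult = f, one = e\<rparr>) \<longleftrightarrow> (\<forall>a<k. f (g a) (\<sigma> w) = g a)"
    and "\<forall>a<k. f (g a) (\<sigma> w) = g a \<Longrightarrow> \<forall>y\<in>S. f (\<sigma> w) y = y \<and> f y (\<sigma> w) = y"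
proof -
  have e: "\<sigma> w \<in> S" using w word_val_L by (auto simp: left_unit_word_def)
  have left: "f (\<sigma> w) y = y" if "y \<in> S" for y
    using left_unit_of_generators[OF e _ that] w by (simp add: left_unit_word_def)
  show unit: "\<forall>y\<in>S. f (\<sigma> w) y = y \<and> f y (\<sigma> w) = y" if "\<forall>a<k. f (g a) (\<sigma> w) = g a"
    using left right_unit_of_generators[OF e that] by blast
  show "(\<exists>e. monoid \<lparr>carrier = S, mult = f, one = e\<rparr>) \<longleftrightarrow> (\<forall>a<k. f (g a) (\<sigma> w) = g a)"
  proof
    assume "\<exists>e. monoid \<lparr>carrier = S, mult = f, one = e\<rparr>"
    then obtain e where "e \<in> S" "\<forall>y\<in>S. f e y = y \<and> f y e = y"
      using monoid_record_iff[OF semigroup] by blast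
    moreover have "\<sigma> w = e" using left[OF \<open>e \<in> S\<close>] calculation e by metis
    ultimately show "\<forall>a<k. f (g a) (\<sigma> w) = g a" using g_in_S by simp
  next
    assume "\<forall>a<k. f (g a) (\<sigma> w) = g a"
    then show "\<exists>e. monoid \<lparr>carrier = S, mult = f, one = e\<rparr>"
      using unit e monoid_record_iff[OF semigroup] by blast
  qed
qed

lemma chain_exists:
  assumes "u \<in> L" "set w \<subseteq> {..<k}"
  shows "\<exists>us. is_chain M_a w us \<and> us ! 0 = u"
  using assms
proof (induction w arbitrary: u)
  case Nil
  then show ?case by (intro exI[of _ "[u]"]) (simp add: is_chain_def)
next
  case (Cons b w)
  have "\<sigma> u \<in> S" "g b \<in> S" using Cons.prems g_in_S word_val_L by auto
  then have "f (\<sigma> u) (g b) \<in> S" using semigroup by (simp add: semigroup_on_def)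
  then obtain v where v: "v \<in> L" "\<sigma> v = \<sigma> (u @ [b])"
    using word_val_L Cons.prems Nil_notin_L word_val_snoc by (metis imageE)
  then have "accepts (M_a ! b) (conv u v)" using M_a_iff Cons.prems by simp
  moreover obtain us where "is_chain M_a w us" "us ! 0 = v" using Cons v by auto
  ultimately show ?case by (intro exI[of _ "u # us"]) (simp add: is_chain_Cons)
qed

lemma chain_last:
  assumes "is_chain M_a w us" "us ! 0 = u" "u \<in> L" "set w \<subseteq> {..<k}"
  shows "us ! length w \<in> L \<and> \<sigma> (us ! length w) = \<sigma> (u @ w)"
  using assms
proof (induction w arbitrary: u us)
  case Nil
  then show ?case by simp
next
  case (Cons b w)
  then obtain us' where us: "us = u # us'" by (cases us) (auto simp: is_chain_def)
  then have acc: "accepts (M_a ! b) (conv u (us' ! 0))" and chain: "is_chain M_a w us'"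
    using Cons.prems by (simp_all add: is_chain_Cons)
  have b: "b < k" using Cons.prems by simp
  then have v: "us' ! 0 \<in> L" "\<sigma> (us' ! 0) = \<sigma> (u @ [b])"
    using M_a_in_L[OF b acc] M_a_iff[OF b] acc Cons.prems by auto
  then have "us' ! length w \<in> L \<and> \<sigma> (us' ! length w) = \<sigma> (us' ! 0 @ w)"
    using Cons.IH[OF chain] Cons.prems by simp
  moreover have "\<sigma> (us' ! 0 @ w) = \<sigma> (u @ b # w)"
    using word_val_append_cong[of "us' ! 0" "u @ [b]" f g w] v Nil_notin_L by fastforce
  ultimately show ?case using us by simp
qed

lemma input_decode: "in_k input = k" "in_M_L input = enc_nfa id M_L"
    "in_M_eq input = enc_nfa enc_pletter M_eq"
    "a < k \<Longrightarrow> code_nth (in_M_a input) a = enc_nfa enc_pletter (M_a ! a)"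
    "a < k \<Longrightarrow> code_nth (in_iota input) a = list_encode (iota ! a)"
  by (simp_all add: input_defs enc_input_def code_nth_list_encode length_M_a length_iota)

lemma left_unit_test_iff_accepts:
  "left_unit_test input (list_encode w) \<longleftrightarrow>
    accepts M_L w \<and> (\<forall>a<k. accepts (M_a ! a) (conv w (iota ! a)))"
  by (simp add: left_unit_test_def input_decode code_accepts_word_enc_nfa code_accepts_pair_enc_nfa)

lemma left_unit_test_iff: "left_unit_test input (list_encode w) \<longleftrightarrow> left_unit_word w"
proof -
  have "accepts (M_a ! a) (conv w (iota ! a)) \<longleftrightarrow> f (\<sigma> w) (g a) = g a"
    if "w \<in> L" "a < k" for a
  proof -
    have "w \<noteq> []" using that(1) Nil_notin_L by auto
    then have "\<sigma> (w @ [a]) = f (\<sigma> w) (g a)" by (rule word_val_snoc)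
    then show ?thesis using M_a_iff[OF that(2,1) iota_in_L[OF that(2)]] g_eq[OF that(2)] by simp
  qed
  then show ?thesis by (auto simp: left_unit_test_iff_accepts left_unit_word_def lang_def)
qed

lemma input_bounds:
  shows "states_bounded input M_L"
    and "a < k \<Longrightarrow> states_bounded input (M_a ! a)"
    and "a < k \<Longrightarrow> length (iota ! a) \<le> in_iota input"
proof -
  have "pfst (psnd input) \<le> input" "pfst (psnd (psnd (psnd input))) \<le> input"
    by (meson order_trans pfst_le psnd_le)+
  then have le: "enc_nfa id M_L \<le> input" "list_encode (map (enc_nfa enc_pletter) M_a) \<le> input"
    by (simp_all add: enc_input_def)
  show "states_bounded input M_L"
    using states_bounded_mono[OF states_bounded_enc_nfa le(1)] .
  assume a: "a < k"
  show "states_bounded input (M_a ! a)"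
  proof (rule states_bounded_mono[OF states_bounded_enc_nfa[of enc_pletter]])
    have "enc_nfa enc_pletter (M_a ! a) \<le> list_encode (map (enc_nfa enc_pletter) M_a)"
      using a length_M_a by (intro member_le_list_encode) auto
    then show "enc_nfa enc_pletter (M_a ! a) \<le> input" using le(2) by linarith
  qed
  have "length (iota ! a) \<le> list_encode (iota ! a)" by (rule length_le_list_encode)
  also have "\<dots> \<le> list_encode (map list_encode iota)"
    using a length_iota by (intro member_le_list_encode) auto
  finally show "length (iota ! a) \<le> in_iota input" by (simp add: input_defs enc_input_def)
qed

lemma has_left_unit_iff: "has_left_unit input \<longleftrightarrow> (\<exists>w. left_unit_word w)"
proof
  assume "has_left_unit input"
  then obtain c where "left_unit_test input c" unfolding has_left_unit_def by blast
  then show "\<exists>w. left_unit_word w"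
    using left_unit_test_iff[of "list_decode c"] by auto
next
  assume "\<exists>w. left_unit_word w"
  then obtain w where "accepts M_L w" "\<forall>a<k. accepts (M_a ! a) (conv w (iota ! a))"
    using left_unit_test_iff left_unit_test_iff_accepts by blast
  then obtain w' where w': "accepts M_L w'" "\<forall>a<k. accepts (M_a ! a) (conv w' (iota ! a))"
    "length w' \<le> in_iota input + 2 ^ ((k + 1) * (input + 1))"
    using short_common_witness[of input M_L k M_a iota "in_iota input" w] input_bounds by blast
  then have "left_unit_test input (list_encode w')" by (simp add: left_unit_test_iff_accepts)
  moreover have "list_encode w' \<le> search_bound input"
  proof -
    have "w' \<in> L" using w'(1) by (simp add: lang_def)
    then have "\<forall>y\<in>set w'. y \<le> k" using L_letters by fastforce
    then have "list_encode w' \<le> code_bound k (length w')" by (rule list_encode_le_code_bound)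
    also have "\<dots> \<le> search_bound input"
      using code_bound_mono[OF w'(3)] by (simp add: search_bound_def input_decode)
    finally show ?thesis .
  qed
  ultimately show "has_left_unit input" unfolding has_left_unit_def by (auto intro: le_imp_less_Suc)
qed

lemma least_left_unit_word:
  assumes "has_left_unit input"
  shows "left_unit_word (list_decode (least_left_unit input))"
proof -
  have "least_left_unit input = (LEAST c. left_unit_test input c)"
    using assms by (simp add: least_left_unit_def has_left_unit_def bounded_min_eq)
  moreover have "\<exists>c. left_unit_test input c" using assms by (auto simp: has_left_unit_def)
  ultimately have "left_unit_test input (least_left_unit input)" using LeastI_ex by simp
  then show ?thesis using left_unit_test_iff[of "list_decode (least_left_unit input)"] by simp
qed

lemma valid_chain_iff:
  assumes "set w \<subseteq> {..<k}" "a < k"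
  shows "valid_chain input (list_encode w) a (list_encode (map list_encode us))
    \<longleftrightarrow> is_chain M_a w us \<and> us ! 0 = iota ! a"
proof (cases "length us = Suc (length w)")
  case True
  then have "\<forall>j\<le>length w. code_nth (list_encode (map list_encode us)) j = list_encode (us ! j)"
    by (simp add: code_nth_list_encode)
  moreover have "\<forall>j<length w. code_nth (in_M_a input) (w ! j) = enc_nfa enc_pletter (M_a ! (w ! j))"
    using assms(1) nth_mem by (fastforce simp: input_decode)
  ultimately show ?thesis
    using True assms(2)
    by (simp add: valid_chain_def is_chain_def code_length_list_encode code_nth_list_encode
        input_decode code_accepts_pair_enc_nfa list_encode_eq) blast
qed (simp add: valid_chain_def is_chain_def code_length_list_encode)

lemma valid_chain_decode:
  assumes "set w \<subseteq> {..<k}" "a < k" "valid_chain input (list_encode w) a ch"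
  obtains us where "ch = list_encode (map list_encode us)" "is_chain M_a w us" "us ! 0 = iota ! a"
proof -
  let ?us = "map list_decode (list_decode ch)"
  have ch: "ch = list_encode (map list_encode ?us)" by (simp add: comp_def)
  have "valid_chain input (list_encode w) a (list_encode (map list_encode ?us))"
    using assms(3) by (simp add: comp_def)
  then show ?thesis using that[OF ch] valid_chain_iff[OF assms(1,2)] by blast
qed

text \<open>Certificates exist because every L_a relates each word of L to some word of L, as the
  interpretation maps L onto S; this is what makes the unbounded search terminate.\<close>

lemma certificate_exists:
  assumes "w \<in> L"
  shows "\<exists>c. valid_certificate input (list_encode w) c"
proof -
  have "\<forall>a. \<exists>us. a < k \<longrightarrow> is_chain M_a w us \<and> us ! 0 = iota ! a"
    using chain_exists iota_in_L L_letters[OF assms] by blast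
  then obtain us where us: "\<And>a. a < k \<Longrightarrow> is_chain M_a w (us a) \<and> us a ! 0 = iota ! a"
    by metis
  let ?c = "list_encode (map (\<lambda>a. list_encode (map list_encode (us a))) [0..<k])"
  have "valid_certificate input (list_encode w) ?c"
    using us valid_chain_iff L_letters[OF assms]
    by (simp add: valid_certificate_def code_length_list_encode code_nth_list_encode input_decode)
  then show ?thesis by blast
qed

lemma right_unit_test_iff:
  assumes w: "w \<in> L" and c: "valid_certificate input (list_encode w) c"
  shows "right_unit_test input (list_encode w) c \<longleftrightarrow> (\<forall>a<k. f (g a) (\<sigma> w) = g a)"
proof -
  have "code_accepts_pair (in_M_eq input) (code_nth (code_nth c a) (length w)) (code_nth (in_iota input) a)
      \<longleftrightarrow> f (g a) (\<sigma> w) = g a" if a: "a < k" for a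
  proof -
    obtain us where us: "code_nth c a = list_encode (map list_encode us)" "is_chain M_a w us"
        "us ! 0 = iota ! a"
      using valid_chain_decode[OF L_letters[OF w] a] c a by (auto simp: valid_certificate_def input_decode)
    have last: "us ! length w \<in> L" "\<sigma> (us ! length w) = \<sigma> (iota ! a @ w)"
      using chain_last[OF us(2,3) iota_in_L[OF a] L_letters[OF w]] by auto
    have "\<sigma> (iota ! a @ w) = f (\<sigma> (iota ! a)) (\<sigma> w)"
      using generators_in_S[OF L_letters[OF iota_in_L[OF a]]] generators_in_S[OF L_letters[OF w]]
        iota_in_L[OF a] w Nil_notin_L
      by (intro word_val_append[OF semigroup]) auto
    then have "\<sigma> (iota ! a @ w) = f (g a) (\<sigma> w)" using g_eq[OF a] by simp
    moreover have "code_nth (code_nth c a) (length w) = list_encode (us ! length w)"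
      using us(1,2) by (simp add: code_nth_list_encode is_chain_def)
    ultimately show ?thesis
      using M_eq_iff[OF last(1) iota_in_L[OF a]] last(2) g_eq[OF a]
      by (simp add: input_decode a code_accepts_pair_enc_nfa)
  qed
  then show ?thesis by (simp add: right_unit_test_def input_decode code_length_list_encode)
qed

lemma search_terminates: "\<exists>c. certificate_found c input"
proof (cases "has_left_unit input")
  case True
  then have "list_decode (least_left_unit input) \<in> L"
    using least_left_unit_word by (simp add: left_unit_word_def)
  then obtain c where "valid_certificate input (least_left_unit input) c"
    using certificate_exists by fastforce
  then show ?thesis by (auto simp: certificate_found_def)
qed (auto simp: certificate_found_def)

abbreviation "answer \<equiv> decision (LEAST c. certificate_found c input) input"

lemma answer_eq:
  "answer = (if \<exists>e. monoid \<lparr>carrier = S, mult = f, one = e\<rparr> then Suc (least_left_unit input) else 0)"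
proof (cases "has_left_unit input")
  case False
  then show ?thesis using monoid_imp_left_unit_word has_left_unit_iff by (auto simp: decision_def)
next
  case True
  let ?c = "LEAST c. certificate_found c input"
  let ?u = "list_decode (least_left_unit input)"
  have u: "left_unit_word ?u" using True by (rule least_left_unit_word)
  have "certificate_found ?c input" using search_terminates by (rule LeastI_ex)
  then have "valid_certificate input (list_encode ?u) ?c" using True by (simp add: certificate_found_def)
  then have "right_unit_test input (list_encode ?u) ?c \<longleftrightarrow> (\<forall>a<k. f (g a) (\<sigma> ?u) = g a)"
    using u by (intro right_unit_test_iff) (simp_all add: left_unit_word_def)
  then have "right_unit_test input (least_left_unit input) ?c
      \<longleftrightarrow> (\<exists>e. monoid \<lparr>carrier = S, mult = f, one = e\<rparr>)"
    using monoid_iff_right_unit(1)[OF u] by simp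
  then show ?thesis using True by (simp add: decision_def)
qed

lemma least_left_unit_identity:
  assumes "\<exists>e. monoid \<lparr>carrier = S, mult = f, one = e\<rparr>"
  defines "u \<equiv> list_decode (least_left_unit input)"
  shows "u \<in> L \<and> (\<forall>y\<in>S. f (\<sigma> u) y = y \<and> f y (\<sigma> u) = y)"
proof -
  have "has_left_unit input" using assms(1) monoid_imp_left_unit_word has_left_unit_iff by blast
  then have u: "left_unit_word u" unfolding u_def by (rule least_left_unit_word)
  then have "\<forall>a<k. f (g a) (\<sigma> u) = g a" using monoid_iff_right_unit(1) assms(1) by blast
  then show ?thesis using monoid_iff_right_unit(2)[OF u] u by (simp add: left_unit_word_def)
qed

lemma decision_correct:
  shows "answer = 0 \<longleftrightarrow> \<not> (\<exists>e. monoid \<lparr>carrier = S, mult = f, one = e\<rparr>)"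
    and "answer = Suc (list_encode w) \<Longrightarrow> w \<in> L \<and> (\<forall>y\<in>S. f (\<sigma> w) y = y \<and> f y (\<sigma> w) = y)"
proof -
  show "answer = 0 \<longleftrightarrow> \<not> (\<exists>e. monoid \<lparr>carrier = S, mult = f, one = e\<rparr>)"
    by (simp add: answer_eq)
  assume "answer = Suc (list_encode w)"
  then have "\<exists>e. monoid \<lparr>carrier = S, mult = f, one = e\<rparr>" "w = list_decode (least_left_unit input)"
    by (auto simp: answer_eq split: if_splits)
  then show "w \<in> L \<and> (\<forall>y\<in>S. f (\<sigma> w) y = y \<and> f y (\<sigma> w) = y)"
    using least_left_unit_identity by simp
qed

end

theorem proposition4p3:
  "\<exists>P :: recf. \<forall>\<Gamma> \<iota> (S :: 'a set) f g.
     semigroup_on S f \<longrightarrow> describes \<Gamma> \<iota> S f g \<longrightarrow>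
     (\<exists>out. eval P [enc_input \<Gamma> \<iota>] out
        \<and> (out = 0 \<longleftrightarrow> \<not> (\<exists>e. monoid \<lparr>carrier = S, mult = f, one = e\<rparr>))
        \<and> (\<forall>w. out = Suc (list_encode w) \<longrightarrow>
              w \<in> L_of \<Gamma> \<and> (\<forall>x \<in> S. f (word_val f g w) x = x \<and> f x (word_val f g w) = x)))"
proof -
  obtain P where P: "\<forall>x. (\<exists>c. certificate_found c x) \<longrightarrow>
      eval P [x] (decision (LEAST c. certificate_found c x) x)"
    using decision_program by blast
  show ?thesis
  proof (intro exI[of _ P] allI impI)
    fix \<Gamma> \<iota> and S :: "'a set" and f g
    assume "semigroup_on S f" "describes \<Gamma> \<iota> S f g"
    moreover obtain k M_L M_eq M_a where \<Gamma>: "\<Gamma> = (k, M_L, M_eq, M_a)" by (cases \<Gamma>)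
    ultimately interpret described_semigroup k M_L M_eq M_a \<iota> S f g
      by unfold_locales simp_all
    show "\<exists>out. eval P [enc_input \<Gamma> \<iota>] out
        \<and> (out = 0 \<longleftrightarrow> \<not> (\<exists>e. monoid \<lparr>carrier = S, mult = f, one = e\<rparr>))
        \<and> (\<forall>w. out = Suc (list_encode w) \<longrightarrow>
              w \<in> L_of \<Gamma> \<and> (\<forall>x \<in> S. f (word_val f g w) x = x \<and> f x (word_val f g w) = x))"
      unfolding \<Gamma> L_of_def using P search_terminates decision_correct
      by (intro exI[of _ answer] conjI allI impI) simp_all
  qed
qed

end
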